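(* Let $\mathcal{T}$ be a stiffly-connected, edge-simple 3-dimensional truss with $n$ vertices and diameter $\Delta$, and let $\mathbf{q}$ be a unit vector orthogonal to the null space of its stiffness matrix. Then there exist an oriented triangle $s$ and a pair of vertices $i,j$ within tetrahedron-distance $O(1)$ of $s$ such that $\|\bar{\mathbf{q}}^{\langle s\rangle}_i-\bar{\mathbf{q}}^{\langle s\rangle}_j\|_2^2=\Omega\left(\frac{1}{\Delta^4 n}\right)$.
   Context: A 3-dimensional truss has $n$ vertices at distinct points $\mathbf{p}_i\in\mathbb{R}^3$, a set of tetrahedra (four vertices each), edges all pairs of vertices sharing a tetrahedron, and positive stiffness coefficients $\gamma(e)$; its stiffness matrix is $\sum_{e=(i,j)}\frac{\gamma(e)}{\|\mathbf{p}_i-\mathbf{p}_j\|_2}\mathbf{b}^{(e)}\mathbf{b}^{(e)\top}$ where $\mathbf{b}^{(e)}\in\mathbb{R}^{3n}$ has block $i$ equal to $(\mathbf{p}_i-\mathbf{p}_j)/\|\mathbf{p}_i-\mathbf{p}_j\|_2$, block $j$ its negative, zeros elsewhere. Edge-simple: tetrahedra form a simplicial complex, each has constant-bounded aspect ratio, and edge lengths and stiffness coefficients are bounded above and below by positive constants. Stiffly-connected: the graph on tetrahedra with adjacency = sharing a triangle face is connected, and for each vertex its restriction to the tetrahedra containing that vertex is connected. The diameter $\Delta$ is the maximum over vertex pairs of the number of edges on a shortest path. For $\mathbf{v}\in\mathbb{R}^{3n}$, $\mathbf{v}_i\in\mathbb{R}^3$ is its $i$-th block. Fix an index $c$ and define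 $\mathbf{p}^{\perp xy}_i=[-(\mathbf{p}_i-\mathbf{p}_c)_y,(\mathbf{p}_i-\mathbf{p}_c)_x,0]^\top$, $\mathbf{p}^{\perp xz}_i=[-(\mathbf{p}_i-\mathbf{p}_c)_z,0,(\mathbf{p}_i-\mathbf{p}_c)_x]^\top$, $\mathbf{p}^{\perp yz}_i=[0,-(\mathbf{p}_i-\mathbf{p}_c)_z,(\mathbf{p}_i-\mathbf{p}_c)_y]^\top$. For an oriented triangle $s=\langle s_1,s_2,s_3\rangle$ (ordered triple of vertices of a triangle face), the centering $\bar{\mathbf{q}}^{\langle s\rangle}$ of $\mathbf{q}$ is the vector $\mathbf{q}+\sum_{d_1d_2\in\{xy,xz,yz\}}c^{\langle s\rangle\perp d_1d_2}\mathbf{p}^{\perp d_1d_2}$ (with real scalars $c$) such that the plane through $\bar{\mathbf{q}}^{\langle s\rangle}_{s_1},\bar{\mathbf{q}}^{\langle s\rangle}_{s_2},\bar{\mathbf{q}}^{\langle s\rangle}_{s_3}$ is parallel to the plane through $\mathbf{p}_{s_1},\mathbf{p}_{s_2},\mathbf{p}_{s_3}$ and $\bar{\mathbf{q}}^{\langle s\rangle}_{s_1}-\bar{\mathbf{q}}^{\langle s\rangle}_{s_2}$ is parallel to $\mathbf{p}_{s_1}-\mathbf{p}_{s_2}$. The tetrahedron-distance between objects $x$ and $y$ of the complex is the smallest $d$ for which there is a sequence of tetrahedra $t^{(0)},\dots,t^{(d)}$ with $x\subseteq t^{(0)}$, $y\subseteq t^{(d)}$, and consecutive tetrahedra sharing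 a triangle face. Constants depend only on the constant bounds above. *)

theory Defs
  imports "HOL-Analysis.Analysis"
begin

text \<open>Vertices are 0..<n, positions p i :: real^3, tetrahedra are 4-element vertex sets,
  stiffness coefficients are given on 2-element vertex sets (edges).
  Vectors of R^{3n} are functions nat => real^3 that vanish outside 0..<n.\<close>

type_synonym pos = "nat \<Rightarrow> real^3"
type_synonym bvec = "nat \<Rightarrow> real^3"

definition block_vectors :: "nat \<Rightarrow> bvec set" where
  "block_vectors n = {v. \<forall>k\<ge>n. v k = 0}"

definition bip :: "nat \<Rightarrow> bvec \<Rightarrow> bvec \<Rightarrow> real" where
  "bip n v w = (\<Sum>k<n. v k \<bullet> w k)"

definition edges :: "nat set set \<Rightarrow> (nat \<times> nat) set" where
  "edges T = {(i,j). i < j \<and> (\<exists>t\<in>T. i \<in> t \<and> j \<in> t)}"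

definition bvec_e :: "pos \<Rightarrow> nat \<Rightarrow> nat \<Rightarrow> bvec" where
  "bvec_e p i j = (\<lambda>k. if k = i then (1 / norm (p i - p j)) *\<^sub>R (p i - p j)
                    else if k = j then - ((1 / norm (p i - p j)) *\<^sub>R (p i - p j))
                    else 0)"

definition stiffness_apply :: "nat \<Rightarrow> pos \<Rightarrow> nat set set \<Rightarrow> (nat set \<Rightarrow> real) \<Rightarrow> bvec \<Rightarrow> bvec" where
  "stiffness_apply n p T \<gamma> v = (\<lambda>k. \<Sum>(i,j)\<in>edges T.
      ((\<gamma> {i,j} / norm (p i - p j)) * bip n (bvec_e p i j) v) *\<^sub>R bvec_e p i j k)"

definition stiffness_null_space :: "nat \<Rightarrow> pos \<Rightarrow> nat set set \<Rightarrow> (nat set \<Rightarrow> real) \<Rightarrow> bvec set" where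
  "stiffness_null_space n p T \<gamma> =
     {v \<in> block_vectors n. stiffness_apply n p T \<gamma> v = (\<lambda>k. 0)}"

definition tet_volume :: "real^3 \<Rightarrow> real^3 \<Rightarrow> real^3 \<Rightarrow> real^3 \<Rightarrow> real" where
  "tet_volume a b c d = \<bar>(b - a) \<bullet> (cross3 (c - a) (d - a))\<bar> / 6"

definition tri_area :: "real^3 \<Rightarrow> real^3 \<Rightarrow> real^3 \<Rightarrow> real" where
  "tri_area a b c = norm (cross3 (b - a) (c - a)) / 2"

definition aspect_ratio :: "real^3 \<Rightarrow> real^3 \<Rightarrow> real^3 \<Rightarrow> real^3 \<Rightarrow> real" where
  "aspect_ratio a b c d =
     (let L = Max {dist a b, dist a c, dist a d, dist b c, dist b d, dist c d};
          S = tri_area a b c + tri_area a b d + tri_area a c d + tri_area b c d;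
          r = 3 * tet_volume a b c d / S
      in L / r)"

definition tet_aspect_ratio :: "pos \<Rightarrow> nat set \<Rightarrow> real" where
  "tet_aspect_ratio p t = (SOME r. \<exists>a b c d. t = {a,b,c,d} \<and> r = aspect_ratio (p a) (p b) (p c) (p d))"

definition simplicial_complex :: "nat \<Rightarrow> pos \<Rightarrow> nat set set \<Rightarrow> bool" where
  "simplicial_complex n p T \<longleftrightarrow>
     (\<forall>t\<in>T. t \<subseteq> {..<n} \<and> card t = 4 \<and> \<not> affine_dependent (p ` t)) \<and>
     (\<forall>t1\<in>T. \<forall>t2\<in>T. convex hull (p ` t1) \<inter> convex hull (p ` t2) = convex hull (p ` (t1 \<inter> t2)))"

definition edge_simple ::
  "real \<Rightarrow> real \<Rightarrow> real \<Rightarrow> real \<Rightarrow> real \<Rightarrow> nat \<Rightarrow> pos \<Rightarrow> nat set set \<Rightarrow> (nat set \<Rightarrow> real) \<Rightarrow> bool" where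
  "edge_simple A lmin lmax gmin gmax n p T \<gamma> \<longleftrightarrow>
     simplicial_complex n p T \<and>
     (\<forall>t\<in>T. tet_aspect_ratio p t \<le> A) \<and>
     (\<forall>(i,j)\<in>edges T. lmin \<le> dist (p i) (p j) \<and> dist (p i) (p j) \<le> lmax
                       \<and> gmin \<le> \<gamma> {i,j} \<and> \<gamma> {i,j} \<le> gmax)"

definition share_face :: "nat set \<Rightarrow> nat set \<Rightarrow> bool" where
  "share_face t1 t2 \<longleftrightarrow> card (t1 \<inter> t2) = 3"

definition connected_on :: "'a set \<Rightarrow> ('a \<Rightarrow> 'a \<Rightarrow> bool) \<Rightarrow> bool" where
  "connected_on S R \<longleftrightarrow> (\<forall>a\<in>S. \<forall>b\<in>S. (a, b) \<in> {(x,y). x \<in> S \<and> y \<in> S \<and> R x y}\<^sup>*)"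

definition stiffly_connected :: "nat \<Rightarrow> nat set set \<Rightarrow> bool" where
  "stiffly_connected n T \<longleftrightarrow>
     connected_on T share_face \<and>
     (\<forall>v<n. connected_on {t\<in>T. v \<in> t} share_face)"

definition graph_dist :: "nat set set \<Rightarrow> nat \<Rightarrow> nat \<Rightarrow> nat" where
  "graph_dist T i j = (LEAST d. \<exists>w::nat\<Rightarrow>nat. w 0 = i \<and> w d = j \<and>
       (\<forall>k<d. (w k, w (Suc k)) \<in> edges T \<or> (w (Suc k), w k) \<in> edges T))"

definition diameter :: "nat \<Rightarrow> nat set set \<Rightarrow> nat" where
  "diameter n T = Max {graph_dist T i j | i j. i < n \<and> j < n}"

definition tet_dist :: "nat set set \<Rightarrow> nat set \<Rightarrow> nat set \<Rightarrow> nat" where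
  "tet_dist T x y = (LEAST d. \<exists>ts::nat\<Rightarrow>nat set. (\<forall>k\<le>d. ts k \<in> T) \<and>
       x \<subseteq> ts 0 \<and> y \<subseteq> ts d \<and> (\<forall>k<d. share_face (ts k) (ts (Suc k))))"

definition perp_xy :: "pos \<Rightarrow> nat \<Rightarrow> bvec" where
  "perp_xy p c = (\<lambda>i. vector [-((p i - p c) $ 2), (p i - p c) $ 1, 0])"
definition perp_xz :: "pos \<Rightarrow> nat \<Rightarrow> bvec" where
  "perp_xz p c = (\<lambda>i. vector [-((p i - p c) $ 3), 0, (p i - p c) $ 1])"
definition perp_yz :: "pos \<Rightarrow> nat \<Rightarrow> bvec" where
  "perp_yz p c = (\<lambda>i. vector [0, -((p i - p c) $ 3), (p i - p c) $ 2])"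

definition oriented_triangle :: "nat set set \<Rightarrow> nat \<times> nat \<times> nat \<Rightarrow> bool" where
  "oriented_triangle T s \<longleftrightarrow> (case s of (s1, s2, s3) \<Rightarrow>
     s1 \<noteq> s2 \<and> s1 \<noteq> s3 \<and> s2 \<noteq> s3 \<and> (\<exists>t\<in>T. {s1, s2, s3} \<subseteq> t))"

definition is_centering :: "pos \<Rightarrow> nat \<Rightarrow> bvec \<Rightarrow> nat \<times> nat \<times> nat \<Rightarrow> bvec \<Rightarrow> bool" where
  "is_centering p c q s qb \<longleftrightarrow> (case s of (s1, s2, s3) \<Rightarrow>
     (\<exists>c1 c2 c3::real. qb = (\<lambda>i. q i + c1 *\<^sub>R perp_xy p c i + c2 *\<^sub>R perp_xz p c i
                                    + c3 *\<^sub>R perp_yz p c i)) \<and>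
     (let N = cross3 (p s2 - p s1) (p s3 - p s1) in
        (qb s2 - qb s1) \<bullet> N = 0 \<and> (qb s3 - qb s1) \<bullet> N = 0) \<and>
     (\<exists>lam::real. qb s1 - qb s2 = lam *\<^sub>R (p s1 - p s2)))"

definition centering :: "pos \<Rightarrow> nat \<Rightarrow> bvec \<Rightarrow> nat \<times> nat \<times> nat \<Rightarrow> bvec" where
  "centering p c q s = (THE qb. is_centering p c q s qb)"

end

theory Submission
  imports Defs
begin

text \<open>Suppose all pairs of vertices near a triangle had centered differences at most \<open>\<epsilon>\<close>.
  Every tetrahedron \<open>t\<close> carries the rotation \<open>\<omega>\<^sub>t\<close> that centers one of its faces, and
  \<open>q\<close> rotated by \<open>\<omega>\<^sub>t\<close> varies by at most \<open>\<epsilon>\<close> on \<open>t\<close>. A rotation that moves two edges of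
  a face of area bounded below only slightly is itself small, so the rotations of face-adjacent
  tetrahedra differ by \<open>O(\<epsilon>)\<close>. Vertex stars contain boundedly many tetrahedra (their inscribed
  balls are disjoint and close to the vertex), so any two vertices are linked by a chain of
  \<open>O(\<Delta>)\<close> face-adjacent tetrahedra, along which the errors add up to \<open>O(\<Delta>\<^sup>2 \<epsilon>)\<close>: at every
  vertex \<open>q\<close> is within \<open>O(\<Delta>\<^sup>2 \<epsilon>)\<close> of one rigid motion. Rigid motions lie in the null space,
  so the unit vector \<open>q\<close> is orthogonal to this one and differs from it by at least \<open>1/\<surd>n\<close>
  at some vertex. Hence \<open>\<epsilon>\<^sup>2 = \<Omega>(1/(\<Delta>\<^sup>4 n))\<close>, already with \<open>C = 1\<close>.\<close>

section \<open>Cross products\<close>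

lemma cross3_frame_expansion:
  fixes w e1 e2 :: "real^3"
  shows "(norm (cross3 e1 e2))\<^sup>2 *\<^sub>R w =
    (cross3 w e2 \<bullet> cross3 e1 e2) *\<^sub>R e1 - (cross3 w e1 \<bullet> cross3 e1 e2) *\<^sub>R e2
    + (cross3 w e1 \<bullet> e2) *\<^sub>R cross3 e1 e2"
  unfolding power2_norm_eq_inner by (simp add: cross3_simps forall_3)

lemma cross3_cross3_left:
  fixes a b c :: "real^3"
  shows "cross3 (cross3 a b) c = (a \<bullet> c) *\<^sub>R b - (b \<bullet> c) *\<^sub>R a"
  by (simp add: cross3_simps forall_3)

lemma cross3_cross3_common:
  fixes u v w :: "real^3"
  shows "cross3 (cross3 u v) (cross3 u w) = (u \<bullet> cross3 v w) *\<^sub>R u"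
  by (simp add: cross3_simps forall_3)

lemma inner_cross3_rotate:
  fixes a b c :: "real^3"
  shows "a \<bullet> cross3 b c = b \<bullet> cross3 c a" and "cross3 a b \<bullet> c = a \<bullet> cross3 b c"
  by (simp_all add: cross3_simps)

lemma cramer_cross3:
  fixes x u v w :: "real^3"
  shows "(u \<bullet> cross3 v w) *\<^sub>R x =
    (x \<bullet> cross3 v w) *\<^sub>R u + (x \<bullet> cross3 w u) *\<^sub>R v + (x \<bullet> cross3 u v) *\<^sub>R w"
  by (simp add: cross3_simps forall_3)

lemma norm_cross3_le:
  fixes x y :: "real^3"
  shows "norm (cross3 x y) \<le> norm x * norm y"
proof -
  have "(norm (cross3 x y))\<^sup>2 \<le> (norm x * norm y)\<^sup>2"
    using norm_cross_dot[of x y] by (metis le_add_same_cancel1 zero_le_power2)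
  then show ?thesis by (simp add: power_mono_iff)
qed

lemma inner_sum_cross3:
  fixes u v w :: "real^3"
  shows "(u + v + w) \<bullet> cross3 v w = u \<bullet> cross3 v w" "(u + v + w) \<bullet> cross3 w u = u \<bullet> cross3 v w"
    "(u + v + w) \<bullet> cross3 u v = u \<bullet> cross3 v w"
  by (simp_all add: cross3_simps)

lemma barycentric_cross3:
  fixes y u v w :: "real^3"
  assumes "u \<bullet> cross3 v w \<noteq> 0"
  shows "y = ((y \<bullet> cross3 v w) / (u \<bullet> cross3 v w)) *\<^sub>R u + ((y \<bullet> cross3 w u) / (u \<bullet> cross3 v w)) *\<^sub>R v
    + ((y \<bullet> cross3 u v) / (u \<bullet> cross3 v w)) *\<^sub>R w"
proof -
  have "y = (1 / (u \<bullet> cross3 v w)) *\<^sub>R ((u \<bullet> cross3 v w) *\<^sub>R y)" using assms by simp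
  also have "\<dots> = (1 / (u \<bullet> cross3 v w)) *\<^sub>R ((y \<bullet> cross3 v w) *\<^sub>R u + (y \<bullet> cross3 w u) *\<^sub>R v
      + (y \<bullet> cross3 u v) *\<^sub>R w)"
    by (simp only: cramer_cross3[of u v w y])
  finally show ?thesis by (simp add: scaleR_add_right divide_inverse_commute)
qed

lemma norm_mult_abs_triple_le:
  fixes e v w :: "real^3"
  shows "norm e * \<bar>e \<bullet> cross3 v w\<bar> \<le> norm (cross3 e v) * norm (cross3 e w)"
  using norm_cross3_le[of "cross3 e v" "cross3 e w"]
  unfolding cross3_cross3_common norm_scaleR by (simp add: mult.commute)

lemma norm_le_of_cross3_le:
  fixes \<eta> e1 e2 :: "real^3"
  assumes f1: "norm (cross3 \<eta> e1) \<le> \<epsilon>" and f2: "norm (cross3 \<eta> e2) \<le> \<epsilon>"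
    and l1: "norm e1 \<le> L" and l2: "norm e2 \<le> L" and \<alpha>: "0 < \<alpha>" "\<alpha> \<le> norm (cross3 e1 e2)"
  shows "norm \<eta> \<le> 3 * \<epsilon> * L / \<alpha>"
proof -
  define N where "N = cross3 e1 e2"
  have N: "0 < norm N" using \<alpha> unfolding N_def by linarith
  have "0 \<le> \<epsilon>" using f1 norm_ge_zero order_trans by blast
  have bound: "norm ((x \<bullet> y) *\<^sub>R z) \<le> \<epsilon> * (norm N * L)"
    if "norm x \<le> \<epsilon>" "norm y * norm z \<le> norm N * L" for x y z :: "real^3"
  proof -
    have "norm ((x \<bullet> y) *\<^sub>R z) \<le> norm x * (norm y * norm z)"
      by (simp add: Cauchy_Schwarz_ineq2 mult_right_mono mult.assoc[symmetric])
    also have "\<dots> \<le> \<epsilon> * (norm N * L)" using that \<open>0 \<le> \<epsilon>\<close> by (rule mult_mono) auto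
    finally show ?thesis .
  qed
  let ?X1 = "(cross3 \<eta> e2 \<bullet> N) *\<^sub>R e1" and ?X2 = "(cross3 \<eta> e1 \<bullet> N) *\<^sub>R e2"
    and ?X3 = "(cross3 \<eta> e1 \<bullet> e2) *\<^sub>R N"
  have "(norm N)\<^sup>2 * norm \<eta> = norm ((norm N)\<^sup>2 *\<^sub>R \<eta>)" by simp
  also have "(norm N)\<^sup>2 *\<^sub>R \<eta> = ?X1 - ?X2 + ?X3" unfolding N_def by (rule cross3_frame_expansion)
  also have "norm (?X1 - ?X2 + ?X3) \<le> norm (?X1 - ?X2) + norm ?X3" by (rule norm_triangle_ineq)
  also have "\<dots> \<le> norm ?X1 + norm ?X2 + norm ?X3" using norm_triangle_ineq4 by (rule add_right_mono)
  also have "\<dots> \<le> 3 * (\<epsilon> * (norm N * L))"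
    using bound[OF f2 mult_left_mono[OF l1 norm_ge_zero]] bound[OF f1 mult_left_mono[OF l2 norm_ge_zero]]
      bound[OF f1, of e2 N] mult_right_mono[OF l2 norm_ge_zero[of N]] by (simp add: mult.commute)
  finally have "norm N * (norm N * norm \<eta>) \<le> norm N * (3 * \<epsilon> * L)"
    by (simp add: power2_eq_square mult_ac)
  then have "norm \<eta> \<le> 3 * \<epsilon> * L / norm N" using N by (simp add: le_divide_eq mult.commute)
  also have "\<dots> \<le> 3 * \<epsilon> * L / \<alpha>"
    using \<alpha> N f1 l1 unfolding N_def by (intro divide_left_mono mult_nonneg_nonneg) (auto intro: order_trans[OF norm_ge_zero])
  finally show ?thesis .
qed

section \<open>Centerings as rotated copies of q\<close>

definition rotation_field :: "pos \<Rightarrow> nat \<Rightarrow> real^3 \<Rightarrow> bvec" where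
  "rotation_field p c w = (\<lambda>i. cross3 w (p i - p c))"

lemma rotation_field_diff: "rotation_field p c w i - rotation_field p c w j = cross3 w (p i - p j)"
  unfolding rotation_field_def by (simp add: cross3_simps forall_3)

lemma perp_combination_eq_rotation_field:
  "c1 *\<^sub>R perp_xy p c i + c2 *\<^sub>R perp_xz p c i + c3 *\<^sub>R perp_yz p c i
     = rotation_field p c (vector [c3, -c2, c1]) i"
  by (simp add: rotation_field_def perp_xy_def perp_xz_def perp_yz_def cross3_simps forall_3)

lemma rotation_field_eq_perp_combination:
  "rotation_field p c w i = (w$3) *\<^sub>R perp_xy p c i + (- (w$2)) *\<^sub>R perp_xz p c i + (w$1) *\<^sub>R perp_yz p c i"
  by (simp add: rotation_field_def perp_xy_def perp_xz_def perp_yz_def cross3_simps forall_3)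

lemma is_centering_iff:
  "is_centering p c q (s1, s2, s3) qb \<longleftrightarrow>
     (\<exists>w. qb = (\<lambda>i. q i + rotation_field p c w i)) \<and>
     (qb s2 - qb s1) \<bullet> cross3 (p s2 - p s1) (p s3 - p s1) = 0 \<and>
     (qb s3 - qb s1) \<bullet> cross3 (p s2 - p s1) (p s3 - p s1) = 0 \<and>
     (\<exists>l. qb s1 - qb s2 = l *\<^sub>R (p s1 - p s2))"
proof -
  have "(\<exists>c1 c2 c3. qb = (\<lambda>i. q i + c1 *\<^sub>R perp_xy p c i + c2 *\<^sub>R perp_xz p c i + c3 *\<^sub>R perp_yz p c i))
      \<longleftrightarrow> (\<exists>w. qb = (\<lambda>i. q i + rotation_field p c w i))"
  proof
    assume "\<exists>c1 c2 c3. qb = (\<lambda>i. q i + c1 *\<^sub>R perp_xy p c i + c2 *\<^sub>R perp_xz p c i + c3 *\<^sub>R perp_yz p c i)"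
    then obtain c1 c2 c3 where "qb = (\<lambda>i. q i + (c1 *\<^sub>R perp_xy p c i + c2 *\<^sub>R perp_xz p c i + c3 *\<^sub>R perp_yz p c i))"
      by (auto simp: add.assoc)
    then show "\<exists>w. qb = (\<lambda>i. q i + rotation_field p c w i)"
      unfolding perp_combination_eq_rotation_field by blast
  next
    assume "\<exists>w. qb = (\<lambda>i. q i + rotation_field p c w i)"
    then obtain w where w: "qb = (\<lambda>i. q i + rotation_field p c w i)" ..
    have "qb = (\<lambda>i. q i + (w$3) *\<^sub>R perp_xy p c i + (- (w$2)) *\<^sub>R perp_xz p c i + (w$1) *\<^sub>R perp_yz p c i)"
      unfolding w by (rule ext) (metis rotation_field_eq_perp_combination add.assoc)
    then show "\<exists>c1 c2 c3. qb = (\<lambda>i. q i + c1 *\<^sub>R perp_xy p c i + c2 *\<^sub>R perp_xz p c i + c3 *\<^sub>R perp_yz p c i)"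
      by blast
  qed
  then show ?thesis unfolding is_centering_def Let_def by simp
qed

lemma centering_unique:
  assumes N: "cross3 (p s2 - p s1) (p s3 - p s1) \<noteq> 0"
    and h1: "is_centering p c q (s1, s2, s3) qb1" and h2: "is_centering p c q (s1, s2, s3) qb2"
  shows "qb1 = qb2"
proof -
  define e1 e2 where "e1 = p s2 - p s1" and "e2 = p s3 - p s1"
  obtain w1 l1 where w1: "qb1 = (\<lambda>i. q i + rotation_field p c w1 i)"
    and l1: "qb1 s1 - qb1 s2 = l1 *\<^sub>R (p s1 - p s2)"
    and n1: "(qb1 s3 - qb1 s1) \<bullet> cross3 e1 e2 = 0"
    using h1 unfolding is_centering_iff e1_def e2_def by blast
  obtain w2 l2 where w2: "qb2 = (\<lambda>i. q i + rotation_field p c w2 i)"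
    and l2: "qb2 s1 - qb2 s2 = l2 *\<^sub>R (p s1 - p s2)"
    and n2: "(qb2 s3 - qb2 s1) \<bullet> cross3 e1 e2 = 0"
    using h2 unfolding is_centering_iff e1_def e2_def by blast
  define \<eta> where "\<eta> = w1 - w2"
  have "(l1 - l2) *\<^sub>R (p s1 - p s2) = cross3 \<eta> (p s1 - p s2)"
    using l1 l2 unfolding w1 w2 \<eta>_def rotation_field_def by (simp add: cross3_simps forall_3)
  then have "cross3 \<eta> e1 = (l1 - l2) *\<^sub>R e1"
    unfolding e1_def by (metis cross_minus_right minus_diff_eq scaleR_minus_right)
  then have "(l1 - l2) * (e1 \<bullet> e1) = 0"
    by (metis dot_cross_self(3) inner_scaleR_left)
  moreover have "e1 \<noteq> 0" using N unfolding e1_def by auto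
  ultimately have f1: "cross3 \<eta> e1 = 0" using \<open>cross3 \<eta> e1 = _\<close> by simp
  have "qb1 s3 - qb1 s1 - (qb2 s3 - qb2 s1) = cross3 \<eta> e2"
    unfolding w1 w2 \<eta>_def e2_def rotation_field_def by (simp add: cross3_simps forall_3)
  then have f2: "cross3 \<eta> e2 \<bullet> cross3 e1 e2 = 0" using n1 n2 by (metis inner_diff_left diff_zero)
  have "(norm (cross3 e1 e2))\<^sup>2 *\<^sub>R \<eta> = 0"
    using cross3_frame_expansion[of e1 e2 \<eta>] f1 f2 by simp
  then have "\<eta> = 0" using N unfolding e1_def e2_def by simp
  then show ?thesis using w1 w2 unfolding \<eta>_def by simp
qed

text \<open>The rotation axis is chosen in two steps: its component orthogonal to the edge
  \<open>e\<^sub>1\<close> aligns \<open>qb s\<^sub>2 - qb s\<^sub>1\<close> with \<open>e\<^sub>1\<close>, and its component along \<open>e\<^sub>1\<close>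
  (which does not affect that difference) moves \<open>qb s\<^sub>3\<close> into the plane.\<close>
lemma centering_exists:
  assumes N: "cross3 (p s2 - p s1) (p s3 - p s1) \<noteq> 0"
  shows "\<exists>qb. is_centering p c q (s1, s2, s3) qb"
proof -
  define e1 e2 where "e1 = p s2 - p s1" and "e2 = p s3 - p s1"
  define N where "N = cross3 e1 e2"
  define d21 d31 where "d21 = q s2 - q s1" and "d31 = q s3 - q s1"
  define k where "k = (d21 \<bullet> e1) / (e1 \<bullet> e1)"
  define g where "g = d21 - k *\<^sub>R e1"
  define w0 where "w0 = (1 / (e1 \<bullet> e1)) *\<^sub>R cross3 g e1"
  define \<mu> where "\<mu> = (- (d31 \<bullet> N) - w0 \<bullet> cross3 e2 N) / (N \<bullet> N)"
  define w where "w = w0 + \<mu> *\<^sub>R e1"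
  define qb where "qb = (\<lambda>i. q i + rotation_field p c w i)"
  have e1: "e1 \<bullet> e1 \<noteq> 0" and NN: "N \<bullet> N \<noteq> 0" using N unfolding N_def e1_def e2_def by auto
  have "g \<bullet> e1 = 0" unfolding g_def k_def using e1 by (simp add: inner_diff_left)
  then have we1: "cross3 w e1 = - g"
    using e1 unfolding w_def w0_def by (simp add: cross_add_left cross_mult_left cross3_cross3_left)
  have "cross3 w e2 \<bullet> N = w0 \<bullet> cross3 e2 N + \<mu> * (e1 \<bullet> cross3 e2 N)"
    unfolding w_def by (simp add: inner_cross3_rotate(2) inner_add_left)
  also have "e1 \<bullet> cross3 e2 N = N \<bullet> N" unfolding N_def by (rule inner_cross3_rotate(2)[symmetric])
  finally have "cross3 w e2 \<bullet> N = w0 \<bullet> cross3 e2 N + \<mu> * (N \<bullet> N)" .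
  then have we2: "cross3 w e2 \<bullet> N = - (d31 \<bullet> N)" using NN unfolding \<mu>_def by simp
  have s21: "qb s2 - qb s1 = d21 + cross3 w e1" and s31: "qb s3 - qb s1 = d31 + cross3 w e2"
    unfolding qb_def d21_def d31_def e1_def e2_def rotation_field_def by (simp_all add: cross3_simps forall_3)
  have "(qb s2 - qb s1) \<bullet> N = 0"
    unfolding s21 we1 g_def N_def by (simp add: inner_diff_left dot_cross_self)
  moreover have "(qb s3 - qb s1) \<bullet> N = 0" unfolding s31 using we2 by (simp add: inner_add_left)
  moreover have "qb s1 - qb s2 = k *\<^sub>R (p s1 - p s2)"
  proof -
    have "qb s2 - qb s1 = k *\<^sub>R e1" unfolding s21 we1 g_def by simp
    then show ?thesis unfolding e1_def by (metis minus_diff_eq scaleR_minus_right)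
  qed
  ultimately have "is_centering p c q (s1, s2, s3) qb"
    unfolding is_centering_iff N_def e1_def e2_def qb_def by blast
  then show ?thesis by blast
qed

lemma centering_eq_rotation:
  assumes "cross3 (p s2 - p s1) (p s3 - p s1) \<noteq> 0"
  shows "\<exists>w. centering p c q (s1, s2, s3) = (\<lambda>i. q i + rotation_field p c w i)"
proof -
  obtain qb where qb: "is_centering p c q (s1, s2, s3) qb" using centering_exists[OF assms] ..
  then have "centering p c q (s1, s2, s3) = qb"
    unfolding centering_def using centering_unique[OF assms] by blast
  then show ?thesis using qb unfolding is_centering_iff by blast
qed

section \<open>A single tetrahedron\<close>

text \<open>\<open>tet_det\<close> is six times the signed volume and \<open>tet_face_sum\<close> twice the surface area,
  so that the inradius is \<open>\<bar>tet_det\<bar> / tet_face_sum\<close>.\<close>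
definition tet_det :: "real^3 \<Rightarrow> real^3 \<Rightarrow> real^3 \<Rightarrow> real^3 \<Rightarrow> real" where
  "tet_det a b c d = (b - a) \<bullet> cross3 (c - a) (d - a)"

definition tet_face_sum :: "real^3 \<Rightarrow> real^3 \<Rightarrow> real^3 \<Rightarrow> real^3 \<Rightarrow> real" where
  "tet_face_sum a b c d = norm (cross3 (b - a) (c - a)) + norm (cross3 (b - a) (d - a))
     + norm (cross3 (c - a) (d - a)) + norm (cross3 (c - b) (d - b))"

lemma tet_det_nonzero:
  fixes a b c d :: "real^3"
  assumes indep: "\<not> affine_dependent {a, b, c, d}"
    and distinct: "a \<noteq> b" "a \<noteq> c" "a \<noteq> d" "b \<noteq> c" "b \<noteq> d" "c \<noteq> d"
  shows "tet_det a b c d \<noteq> 0"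
proof
  assume "tet_det a b c d = 0"
  define u v w where "u = b - a" and "v = c - a" and "w = d - a"
  have uvw: "u \<bullet> cross3 v w = 0" using \<open>tet_det a b c d = 0\<close> unfolding tet_det_def u_def v_def w_def .
  obtain \<alpha> \<beta> \<gamma> where nz: "\<alpha> \<noteq> 0 \<or> \<beta> \<noteq> 0 \<or> \<gamma> \<noteq> 0"
    and comb: "\<alpha> *\<^sub>R u + \<beta> *\<^sub>R v + \<gamma> *\<^sub>R w = 0"
  proof (cases "cross3 v w = 0")
    case False
    have "cross3 u v \<bullet> w = 0" using uvw by (simp add: inner_cross3_rotate)
    then have e: "(norm (cross3 v w))\<^sup>2 *\<^sub>R u
        = (cross3 u w \<bullet> cross3 v w) *\<^sub>R v - (cross3 u v \<bullet> cross3 v w) *\<^sub>R w"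
      using cross3_frame_expansion[of v w u] by simp
    show ?thesis
    proof (rule that)
      show "(norm (cross3 v w))\<^sup>2 *\<^sub>R u + (- (cross3 u w \<bullet> cross3 v w)) *\<^sub>R v
          + (cross3 u v \<bullet> cross3 v w) *\<^sub>R w = 0"
        unfolding e by simp
    qed (use False in simp)
  next
    case True
    then have "cross3 (cross3 w v) w = 0" by (metis cross_skew cross_zero_left neg_equal_0_iff_equal)
    then have "0 *\<^sub>R u + (w \<bullet> w) *\<^sub>R v + (- (v \<bullet> w)) *\<^sub>R w = 0"
      by (simp add: cross3_cross3_left)
    moreover have "w \<bullet> w \<noteq> 0" using distinct unfolding w_def by simp
    ultimately show ?thesis using that[of 0 "w \<bullet> w" "- (v \<bullet> w)"] by simp
  qed
  define U where "U z = (if z = b then \<alpha> else if z = c then \<beta> else if z = d then \<gamma> else - (\<alpha> + \<beta> + \<gamma>))" for z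
  have "sum U {a, b, c, d} = 0" "\<exists>z\<in>{a, b, c, d}. U z \<noteq> 0"
    using distinct nz unfolding U_def by auto
  moreover have "(\<Sum>z\<in>{a, b, c, d}. U z *\<^sub>R z) = 0"
    using distinct comb unfolding U_def u_def v_def w_def by (simp add: algebra_simps)
  ultimately
  have "affine_dependent {a, b, c, d}" by (subst affine_dependent_explicit_finite) auto
  then show False using indep by simp
qed

lemma norm_faces_le_tet_face_sum:
  "norm (cross3 (b - a) (c - a)) \<le> tet_face_sum a b c d" "norm (cross3 (b - a) (d - a)) \<le> tet_face_sum a b c d"
  "norm (cross3 (c - a) (d - a)) \<le> tet_face_sum a b c d" "norm (cross3 (c - b) (d - b)) \<le> tet_face_sum a b c d"
  unfolding tet_face_sum_def by (smt (verit) norm_ge_zero)+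

lemma aspect_ratio_eq_inradius:
  "aspect_ratio a b c d = Max {dist a b, dist a c, dist a d, dist b c, dist b d, dist c d}
     / (\<bar>tet_det a b c d\<bar> / tet_face_sum a b c d)"
  unfolding aspect_ratio_def Let_def tet_volume_def tri_area_def tet_det_def tet_face_sum_def
  by (simp add: field_simps)

lemma inradius_ge_of_aspect_ratio_le:
  assumes ar: "aspect_ratio a b c d \<le> A" and lmin: "0 < lmin" "lmin \<le> dist a b"
    and D: "tet_det a b c d \<noteq> 0"
  shows "0 < A" and "lmin / A * tet_face_sum a b c d \<le> \<bar>tet_det a b c d\<bar>"
proof -
  define L where "L = Max {dist a b, dist a c, dist a d, dist b c, dist b d, dist c d}"
  define r where "r = \<bar>tet_det a b c d\<bar> / tet_face_sum a b c d"
  have "dist a b \<le> L" unfolding L_def by (rule Max_ge) auto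
  then have L: "lmin \<le> L" using lmin by linarith
  have "cross3 (c - a) (d - a) \<noteq> 0" using D unfolding tet_det_def by auto
  then have S: "0 < tet_face_sum a b c d" unfolding tet_face_sum_def by (smt (verit) norm_ge_zero zero_less_norm_iff)
  then have r: "0 < r" using D unfolding r_def by simp
  have "L / r \<le> A" using ar unfolding aspect_ratio_eq_inradius L_def r_def .
  then have "L \<le> A * r" using r by (simp add: pos_divide_le_eq)
  then show A: "0 < A" using L lmin r by (smt (verit) zero_less_mult_pos2)
  have "lmin / A \<le> r" using \<open>L \<le> A * r\<close> L A by (simp add: pos_divide_le_eq mult.commute)
  then show "lmin / A * tet_face_sum a b c d \<le> \<bar>tet_det a b c d\<bar>"
    using S unfolding r_def by (simp add: le_divide_eq)
qed

text \<open>For two faces \<open>X, Y\<close> through an edge \<open>e\<close>, \<open>\<parallel>e\<parallel> \<bar>tet_det\<bar> \<le> \<parallel>X\<parallel> \<parallel>Y\<parallel>\<close>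
  (\<open>norm_mult_abs_triple_le\<close>), and \<open>\<parallel>Y\<parallel> \<le> tet_face_sum \<le> \<bar>tet_det\<bar> / r\<close>.\<close>
lemma tet_face_lower_bounds:
  fixes a b c d :: "real^3"
  assumes D: "tet_det a b c d \<noteq> 0" and r: "0 < r" "r * tet_face_sum a b c d \<le> \<bar>tet_det a b c d\<bar>"
    and lmin: "0 < lmin" "lmin \<le> norm (b - a)" "lmin \<le> norm (c - a)" "lmin \<le> norm (c - b)"
  shows "lmin * r \<le> norm (cross3 (b - a) (c - a))" "lmin * r \<le> norm (cross3 (b - a) (d - a))"
    "lmin * r \<le> norm (cross3 (c - a) (d - a))" "lmin * r \<le> norm (cross3 (c - b) (d - b))"
proof -
  let ?D = "\<bar>tet_det a b c d\<bar>" and ?S = "tet_face_sum a b c d"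
  have key: "lmin * r \<le> X" if e: "norm e * ?D \<le> X * Y" "lmin \<le> norm e" and Y: "Y \<le> ?S" "0 \<le> Y"
    for e :: "real^3" and X Y
  proof -
    have "0 < lmin * ?D" using D lmin by simp
    also have "\<dots> \<le> X * Y" using e D by (metis abs_ge_zero mult_right_mono order_trans)
    finally have "0 < X * Y" .
    then have X: "0 < X" and "0 < Y" using Y by (auto simp: zero_less_mult_iff)
    have "lmin * r * Y \<le> lmin * (r * ?S)" using Y lmin r by (simp add: mult_left_mono)
    also have "\<dots> \<le> lmin * ?D" using r lmin by (simp add: mult_left_mono)
    also have "\<dots> \<le> X * Y" using e D by (metis abs_ge_zero mult_right_mono order_trans)
    finally show ?thesis using \<open>0 < Y\<close> by simp
  qed
  let ?X1 = "norm (cross3 (b - a) (c - a))" and ?X2 = "norm (cross3 (b - a) (d - a))"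
    and ?X3 = "norm (cross3 (c - a) (d - a))" and ?X4 = "norm (cross3 (c - b) (d - b))"
  note S = norm_faces_le_tet_face_sum[where a = a and b = b and c = c and d = d]
  have X1: "norm (cross3 (c - a) (b - a)) = ?X1" and X4: "cross3 (c - b) (a - b) = cross3 (b - a) (c - a)"
    by (metis cross_skew norm_minus_cancel) (simp add: cross3_simps forall_3)
  have dets: "(b - a) \<bullet> cross3 (d - a) (c - a) = - tet_det a b c d"
    "(c - a) \<bullet> cross3 (d - a) (b - a) = tet_det a b c d"
    "(c - b) \<bullet> cross3 (d - b) (a - b) = - tet_det a b c d"
    unfolding tet_det_def by (simp_all add: cross3_simps)
  have faces: "norm (b - a) * ?D \<le> ?X1 * ?X2" "norm (b - a) * ?D \<le> ?X2 * ?X1"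
    "norm (c - a) * ?D \<le> ?X3 * ?X1" "norm (c - b) * ?D \<le> ?X4 * ?X1"
    using norm_mult_abs_triple_le[of "b - a" "c - a" "d - a"] norm_mult_abs_triple_le[of "b - a" "d - a" "c - a"]
      norm_mult_abs_triple_le[of "c - a" "d - a" "b - a"] norm_mult_abs_triple_le[of "c - b" "d - b" "a - b"]
    by (simp_all only: tet_det_def dets abs_minus_cancel X1 X4)
  show "lmin * r \<le> ?X1" by (rule key[OF faces(1) lmin(2) S(2)]) simp
  show "lmin * r \<le> ?X2" by (rule key[OF faces(2) lmin(2) S(1)]) simp
  show "lmin * r \<le> ?X3" by (rule key[OF faces(3) lmin(3) S(1)]) simp
  show "lmin * r \<le> ?X4" by (rule key[OF faces(4) lmin(4) S(1)]) simp
qed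

lemma convex_hull_4_mem:
  fixes a b c d :: "'a::real_vector"
  assumes "0 \<le> u1" "0 \<le> u2" "0 \<le> u3" "0 \<le> u4" "u1 + u2 + u3 + u4 = 1"
  shows "u1 *\<^sub>R a + u2 *\<^sub>R b + u3 *\<^sub>R c + u4 *\<^sub>R d \<in> convex hull {a, b, c, d}"
proof -
  define u y where "u = (\<lambda>i::nat. [u1, u2, u3, u4] ! i)" and "y = (\<lambda>i::nat. [a, b, c, d] ! i)"
  have "(\<Sum>i\<in>{0, 1, 2, 3}. u i *\<^sub>R y i) \<in> convex hull {a, b, c, d}"
    by (rule convex_sum) (use assms in \<open>auto simp: u_def y_def hull_inc\<close>)
  then show ?thesis by (simp add: u_def y_def add.assoc)
qed

text \<open>Each barycentric coordinate of \<open>x\<close> is \<open>1/4\<close> plus the component of \<open>x\<close> minus the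
  centroid along a face normal divided by \<open>tet_det\<close>, which is at most \<open>1/4\<close> in modulus.\<close>
lemma ball_centroid_subset_convex_hull:
  fixes a b c d :: "real^3"
  assumes D: "tet_det a b c d \<noteq> 0" and \<rho>: "\<rho> * tet_face_sum a b c d \<le> \<bar>tet_det a b c d\<bar> / 4"
  shows "ball ((1/4) *\<^sub>R (a + b + c + d)) \<rho> \<subseteq> convex hull {a, b, c, d}"
proof
  fix x assume x: "x \<in> ball ((1/4) *\<^sub>R (a + b + c + d)) \<rho>"
  define g where "g = (1/4) *\<^sub>R (a + b + c + d)"
  have "norm (x - g) < \<rho>" using x unfolding g_def by (simp add: dist_norm norm_minus_commute)
  then have "0 \<le> \<rho>" using norm_ge_zero[of "x - g"] by linarith
  define u v w where "u = b - a" and "v = c - a" and "w = d - a"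
  define DD where "DD = tet_det a b c d"
  have DD: "DD = u \<bullet> cross3 v w" unfolding DD_def tet_det_def u_def v_def w_def ..
  have n4: "cross3 v w + cross3 w u + cross3 u v = cross3 (c - b) (d - b)"
    unfolding u_def v_def w_def by (simp add: cross3_simps forall_3)
  have small: "\<bar>((x - g) \<bullet> N) / DD\<bar> \<le> 1/4" if "norm N \<le> tet_face_sum a b c d" for N
  proof -
    have "\<bar>(x - g) \<bullet> N\<bar> \<le> norm (x - g) * norm N" by (rule Cauchy_Schwarz_ineq2)
    also have "\<dots> \<le> \<rho> * tet_face_sum a b c d"
      using \<open>norm (x - g) < \<rho>\<close> \<open>0 \<le> \<rho>\<close> that by (intro mult_mono) auto
    finally show ?thesis using \<rho> D unfolding DD_def by (simp add: abs_divide divide_le_eq)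
  qed
  have "norm (cross3 w u) = norm (cross3 u w)" by (metis cross_skew norm_minus_cancel)
  then have S: "norm (cross3 v w) \<le> tet_face_sum a b c d" "norm (cross3 w u) \<le> tet_face_sum a b c d"
    "norm (cross3 u v) \<le> tet_face_sum a b c d" "norm (cross3 (c - b) (d - b)) \<le> tet_face_sum a b c d"
    using norm_faces_le_tet_face_sum[where a = a and b = b and c = c and d = d] unfolding u_def v_def w_def by linarith+
  have ga: "g - a = (1/4) *\<^sub>R (u + v + w)" unfolding g_def u_def v_def w_def by (simp add: vec_eq_iff)
  have g: "(g - a) \<bullet> cross3 v w = DD / 4" "(g - a) \<bullet> cross3 w u = DD / 4" "(g - a) \<bullet> cross3 u v = DD / 4"
    unfolding ga DD inner_scaleR_left inner_sum_cross3 by simp_all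
  have coord: "((x - a) \<bullet> N) / DD = 1/4 + ((x - g) \<bullet> N) / DD" if "(g - a) \<bullet> N = DD / 4" for N
  proof -
    have "(x - a) \<bullet> N = (x - g) \<bullet> N + (g - a) \<bullet> N" by (simp add: inner_diff_left)
    with that have "(x - a) \<bullet> N = (x - g) \<bullet> N + DD / 4" by simp
    then show ?thesis using D unfolding DD_def by (simp add: add_divide_distrib)
  qed
  define \<beta> \<gamma> \<delta> where "\<beta> = ((x - a) \<bullet> cross3 v w) / DD" and "\<gamma> = ((x - a) \<bullet> cross3 w u) / DD"
    and "\<delta> = ((x - a) \<bullet> cross3 u v) / DD"
  have "1 - \<beta> - \<gamma> - \<delta> = 1/4 - ((x - g) \<bullet> cross3 (c - b) (d - b)) / DD"
    unfolding \<beta>_def \<gamma>_def \<delta>_def coord[OF g(1)] coord[OF g(2)] coord[OF g(3)]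
      n4[symmetric] by (simp add: inner_add_right add_divide_distrib)
  then have nonneg: "0 \<le> 1 - \<beta> - \<gamma> - \<delta>" "0 \<le> \<beta>" "0 \<le> \<gamma>" "0 \<le> \<delta>"
    using small[OF S(4)] small[OF S(1)] small[OF S(2)] small[OF S(3)]
    unfolding \<beta>_def \<gamma>_def \<delta>_def coord[OF g(1)] coord[OF g(2)]
      coord[OF g(3)] by linarith+
  have "x - a = \<beta> *\<^sub>R u + \<gamma> *\<^sub>R v + \<delta> *\<^sub>R w"
    unfolding \<beta>_def \<gamma>_def \<delta>_def DD by (rule barycentric_cross3) (use D DD DD_def in simp)
  then have "x = (1 - \<beta> - \<gamma> - \<delta>) *\<^sub>R a + \<beta> *\<^sub>R b + \<gamma> *\<^sub>R c + \<delta> *\<^sub>R d"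
    unfolding u_def v_def w_def by (simp add: algebra_simps)
  then show "x \<in> convex hull {a, b, c, d}" using convex_hull_4_mem[OF nonneg] by simp
qed

lemma card_eq_4_iff_distinct:
  "card t = 4 \<longleftrightarrow> (\<exists>a b c d. t = {a, b, c, d} \<and> a \<noteq> b \<and> a \<noteq> c \<and> a \<noteq> d \<and> b \<noteq> c \<and> b \<noteq> d \<and> c \<noteq> d)"
proof
  assume "card t = 4"
  then have "card t = Suc (Suc (Suc (Suc 0)))" by simp
  then show "\<exists>a b c d. t = {a, b, c, d} \<and> a \<noteq> b \<and> a \<noteq> c \<and> a \<noteq> d \<and> b \<noteq> c \<and> b \<noteq> d \<and> c \<noteq> d"
    by (auto simp: card_Suc_eq)
next
  assume "\<exists>a b c d. t = {a, b, c, d} \<and> a \<noteq> b \<and> a \<noteq> c \<and> a \<noteq> d \<and> b \<noteq> c \<and> b \<noteq> d \<and> c \<noteq> d"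
  then show "card t = 4" by auto
qed

lemma card_4_imp_distinct:
  assumes "card {a, b, c, d} = 4"
  shows "a \<noteq> b" "a \<noteq> c" "a \<noteq> d" "b \<noteq> c" "b \<noteq> d" "c \<noteq> d"
proof -
  have "card {a, b, c, d} \<le> 3" if "a = b \<or> a = c \<or> a = d \<or> b = c \<or> b = d \<or> c = d"
  proof -
    have "\<exists>x y z. {a, b, c, d} = {x, y, z}" using that by auto
    then obtain x y z where "{a, b, c, d} = {x, y, z}" by blast
    then show ?thesis by (simp add: card_insert_if)
  qed
  then show "a \<noteq> b" "a \<noteq> c" "a \<noteq> d" "b \<noteq> c" "b \<noteq> d" "c \<noteq> d" using assms by force+
qed

definition face_cross_ge :: "real \<Rightarrow> real^3 \<Rightarrow> real^3 \<Rightarrow> real^3 \<Rightarrow> bool" where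
  "face_cross_ge \<alpha> x y z \<longleftrightarrow> \<alpha> \<le> norm (cross3 (y - x) (z - x))"

lemma face_cross_ge_swap: "face_cross_ge \<alpha> x y z \<Longrightarrow> face_cross_ge \<alpha> x z y"
  unfolding face_cross_ge_def by (metis cross_skew norm_minus_cancel)

lemma face_cross_ge_rotate: "face_cross_ge \<alpha> x y z \<Longrightarrow> face_cross_ge \<alpha> y z x"
proof -
  have "cross3 (z - y) (x - y) = cross3 (y - x) (z - x)" by (simp add: cross3_simps forall_3)
  then show "face_cross_ge \<alpha> x y z \<Longrightarrow> face_cross_ge \<alpha> y z x" unfolding face_cross_ge_def by simp
qed

lemma face_cross_ge_tetrahedron:
  assumes "face_cross_ge \<alpha> a b c" "face_cross_ge \<alpha> a b d" "face_cross_ge \<alpha> a c d" "face_cross_ge \<alpha> b c d"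
    and "x \<in> {a, b, c, d}" "y \<in> {a, b, c, d}" "z \<in> {a, b, c, d}" "x \<noteq> y" "x \<noteq> z" "y \<noteq> z"
  shows "face_cross_ge \<alpha> x y z"
  using assms by (auto intro: face_cross_ge_swap face_cross_ge_rotate face_cross_ge_rotate[OF face_cross_ge_swap]
      face_cross_ge_swap[OF face_cross_ge_rotate] face_cross_ge_rotate[OF face_cross_ge_rotate]
      face_cross_ge_swap[OF face_cross_ge_rotate[OF face_cross_ge_rotate]])

definition centroid :: "pos \<Rightarrow> nat set \<Rightarrow> real^3" where
  "centroid p t = (1/4) *\<^sub>R (\<Sum>x\<in>t. p x)"

section \<open>Packing\<close>

lemma dist_ge_of_balls_in_thin_intersection:
  fixes g1 g2 :: "'a::real_normed_vector"
  assumes "ball g1 \<rho> \<subseteq> H1" "ball g2 \<rho> \<subseteq> H2" "interior (H1 \<inter> H2) = {}"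
  shows "\<rho> \<le> dist g1 g2"
proof (rule ccontr)
  assume "\<not> \<rho> \<le> dist g1 g2"
  then have "g1 \<in> ball g1 (\<rho> - dist g1 g2)" by simp
  moreover have "ball g1 (\<rho> - dist g1 g2) \<subseteq> H1 \<inter> H2"
  proof
    fix x assume "x \<in> ball g1 (\<rho> - dist g1 g2)"
    then have "dist g1 x < \<rho> - dist g1 g2" by simp
    moreover have "dist g2 x \<le> dist g1 g2 + dist g1 x" using dist_triangle[of g2 x g1] by (simp add: dist_commute)
    ultimately have "dist g1 x < \<rho>" "dist g2 x < \<rho>" using zero_le_dist[of g1 g2] by linarith+
    then have "x \<in> ball g1 \<rho>" "x \<in> ball g2 \<rho>" by simp_all
    then show "x \<in> H1 \<inter> H2" using assms(1,2) by auto
  qed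
  then have "ball g1 (\<rho> - dist g1 g2) \<subseteq> interior (H1 \<inter> H2)" by (intro interior_maximal) auto
  ultimately show False using assms(3) by blast
qed

text \<open>Assign to each point its cell in the grid of mesh \<open>h/4\<close>;
  points in the same cell are closer than \<open>3h/4\<close>, so the assignment is injective.\<close>
lemma card_separated_points_le:
  fixes X :: "(real^3) set" and z :: "real^3"
  assumes R: "\<forall>x\<in>X. dist z x \<le> R"
    and sep: "\<forall>x\<in>X. \<forall>y\<in>X. x \<noteq> y \<longrightarrow> h \<le> dist x y" and h: "0 < h"
  shows "card X \<le> (nat (2 * \<lceil>R / (h/4)\<rceil> + 1))^3"
proof -
  define s where "s = h / 4"
  have s: "0 < s" using h unfolding s_def by simp
  define m where "m = \<lceil>R / s\<rceil>"
  define cell where "cell x = (\<lfloor>(x$1 - z$1) / s\<rfloor>, \<lfloor>(x$2 - z$2) / s\<rfloor>, \<lfloor>(x$3 - z$3) / s\<rfloor>)" for x :: "real^3"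
  have bounded: "\<lfloor>(x$i - z$i) / s\<rfloor> \<in> {-m..m}" if "x \<in> X" for x i
  proof -
    have "\<bar>x$i - z$i\<bar> \<le> norm (x - z)" using component_le_norm_cart[of "x - z" i] by simp
    also have "\<dots> \<le> R" using R that by (simp add: dist_norm norm_minus_commute)
    finally have "\<bar>(x$i - z$i) / s\<bar> \<le> R / s" using s by (simp add: abs_divide divide_right_mono)
    then have "- ((x$i - z$i) / s) \<le> R / s" "(x$i - z$i) / s \<le> R / s" by (rule abs_le_D2, rule abs_le_D1)
    moreover have "R / s \<le> of_int m" unfolding m_def by simp
    ultimately show ?thesis by (auto simp: le_floor_iff floor_le_iff)
  qed
  have "inj_on cell X"
  proof (rule inj_onI, rule ccontr)
    fix x y assume xy: "x \<in> X" "y \<in> X" "cell x = cell y" "x \<noteq> y"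
    have close: "\<bar>x$i - y$i\<bar> < s" if "i = 1 \<or> i = 2 \<or> i = 3" for i
    proof -
      have "\<lfloor>(x$i - z$i) / s\<rfloor> = \<lfloor>(y$i - z$i) / s\<rfloor>" using xy(3) that unfolding cell_def by auto
      then have "\<bar>(x$i - z$i) / s - (y$i - z$i) / s\<bar> < 1" by linarith
      then have "\<bar>(x$i - y$i) / s\<bar> < 1" by (simp add: diff_divide_distrib)
      then show ?thesis using s by (simp add: abs_divide)
    qed
    have "norm (x - y) \<le> (\<Sum>i\<in>UNIV. \<bar>(x - y)$i\<bar>)" by (rule norm_le_l1_cart)
    also have "\<dots> = \<bar>x$1 - y$1\<bar> + \<bar>x$2 - y$2\<bar> + \<bar>x$3 - y$3\<bar>" by (simp add: sum_3)
    also have "\<dots> < 3 * s" using close[of 1] close[of 2] close[of 3] by simp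
    also have "\<dots> < h" using h unfolding s_def by simp
    finally show False using sep xy by (force simp: dist_norm)
  qed
  then have "card X = card (cell ` X)" by (simp add: card_image)
  also have "\<dots> \<le> card ({-m..m} \<times> {-m..m} \<times> {-m..m})"
    by (rule card_mono) (use bounded in \<open>auto simp: cell_def\<close>)
  also have "\<dots> = (nat (2 * m + 1))^3" by (simp add: card_cartesian_product power3_eq_cube)
  finally show ?thesis unfolding m_def s_def .
qed

section \<open>Rigid motions\<close>

lemma bip_bvec_e:
  assumes "i < n" "j < n" "i \<noteq> j"
  shows "bip n (bvec_e p i j) m = (1 / norm (p i - p j)) * ((p i - p j) \<bullet> (m i - m j))"
proof -
  have "bip n (bvec_e p i j) m = (\<Sum>k\<in>{i, j}. bvec_e p i j k \<bullet> m k)"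
    unfolding bip_def by (rule sum.mono_neutral_right) (use assms in \<open>auto simp: bvec_e_def\<close>)
  then show ?thesis using assms by (simp add: bvec_e_def inner_diff_right algebra_simps)
qed

definition rigid_motion :: "nat \<Rightarrow> pos \<Rightarrow> nat \<Rightarrow> real^3 \<Rightarrow> real^3 \<Rightarrow> bvec" where
  "rigid_motion n p c \<tau> w = (\<lambda>k. if k < n then \<tau> + rotation_field p c w k else 0)"

lemma rigid_motion_in_null_space:
  assumes "\<forall>t\<in>T. t \<subseteq> {..<n}"
  shows "rigid_motion n p c \<tau> w \<in> stiffness_null_space n p T \<gamma>"
proof -
  have "bip n (bvec_e p i j) (rigid_motion n p c \<tau> w) = 0" if "(i, j) \<in> edges T" for i j
  proof -
    have ij: "i < n" "j < n" "i \<noteq> j" using that assms unfolding edges_def by auto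
    then have "rigid_motion n p c \<tau> w i - rigid_motion n p c \<tau> w j = cross3 w (p i - p j)"
      unfolding rigid_motion_def by (simp add: rotation_field_diff)
    then show ?thesis using bip_bvec_e[OF ij] by (simp add: dot_cross_self)
  qed
  then have "stiffness_apply n p T \<gamma> (rigid_motion n p c \<tau> w) = (\<lambda>k. 0)"
    unfolding stiffness_apply_def by (intro ext sum.neutral) auto
  then show ?thesis unfolding stiffness_null_space_def block_vectors_def rigid_motion_def by simp
qed

lemma one_le_sum_sq_dist_of_orthogonal:
  assumes "bip n q q = 1" "bip n q m = 0"
  shows "1 \<le> (\<Sum>k<n. (norm (q k - m k))\<^sup>2)"
proof -
  have "(\<Sum>k<n. (norm (q k - m k))\<^sup>2) = (\<Sum>k<n. q k \<bullet> q k - 2 * (q k \<bullet> m k) + m k \<bullet> m k)"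
    by (rule sum.cong) (auto simp: power2_norm_eq_inner inner_diff_left inner_diff_right inner_commute)
  also have "\<dots> = bip n q q - 2 * bip n q m + (\<Sum>k<n. m k \<bullet> m k)"
    unfolding bip_def by (simp add: sum.distrib sum_subtractf sum_distrib_left)
  finally show ?thesis using assms by (simp add: sum_nonneg)
qed

text \<open>Subtracting the rigid motion that agrees with the rotated \<open>q\<close> at \<open>a\<close>, which \<open>q\<close> is
  orthogonal to, leaves a vector of norm at least one; so some vertex carries \<open>1/n\<close> of it.\<close>
lemma exists_far_vertex:
  assumes T: "\<forall>t\<in>T. t \<subseteq> {..<n}" and q: "bip n q q = 1" "\<forall>v\<in>stiffness_null_space n p T \<gamma>. bip n q v = 0"
    and a: "a < n"
  shows "\<exists>k<n. 1 / real n \<le> (norm ((q k + rotation_field p c w k) - (q a + rotation_field p c w a)))\<^sup>2"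
proof (rule ccontr)
  assume "\<not> ?thesis"
  then have small: "(norm ((q k + rotation_field p c w k) - (q a + rotation_field p c w a)))\<^sup>2 < 1 / real n"
    if "k < n" for k using that by auto
  define m where "m = rigid_motion n p c (q a + rotation_field p c w a) (- w)"
  have "m \<in> stiffness_null_space n p T \<gamma>" unfolding m_def by (rule rigid_motion_in_null_space[OF T])
  then have "1 \<le> (\<Sum>k<n. (norm (q k - m k))\<^sup>2)" using q by (intro one_le_sum_sq_dist_of_orthogonal) auto
  also have "\<dots> = (\<Sum>k<n. (norm ((q k + rotation_field p c w k) - (q a + rotation_field p c w a)))\<^sup>2)"
    by (rule sum.cong) (auto simp: m_def rigid_motion_def rotation_field_def algebra_simps)
  also have "\<dots> < (\<Sum>k<n. 1 / real n)" using a small by (intro sum_strict_mono) auto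
  also have "\<dots> = 1" using a by simp
  finally show False by simp
qed

section \<open>Walks\<close>

definition graph_walk :: "nat set set \<Rightarrow> (nat \<Rightarrow> nat) \<Rightarrow> nat \<Rightarrow> bool" where
  "graph_walk T w d \<longleftrightarrow> (\<forall>k<d. (w k, w (Suc k)) \<in> edges T \<or> (w (Suc k), w k) \<in> edges T)"

definition tet_walk :: "nat set set \<Rightarrow> nat \<Rightarrow> (nat \<Rightarrow> nat set) \<Rightarrow> bool" where
  "tet_walk T K ts \<longleftrightarrow> (\<forall>k\<le>K. ts k \<in> T) \<and> (\<forall>k<K. share_face (ts k) (ts (Suc k)))"

lemma graph_walk_append:
  assumes "graph_walk T w1 d1" "graph_walk T w2 d2" "w1 d1 = w2 0"
  shows "graph_walk T (\<lambda>k. if k \<le> d1 then w1 k else w2 (k - d1)) (d1 + d2)"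
  unfolding graph_walk_def
proof (intro allI impI)
  fix k assume k: "k < d1 + d2"
  show "((if k \<le> d1 then w1 k else w2 (k - d1)), (if Suc k \<le> d1 then w1 (Suc k) else w2 (Suc k - d1))) \<in> edges T \<or>
        ((if Suc k \<le> d1 then w1 (Suc k) else w2 (Suc k - d1)), (if k \<le> d1 then w1 k else w2 (k - d1))) \<in> edges T"
  proof (cases "k < d1")
    case True then show ?thesis using assms(1) unfolding graph_walk_def by auto
  next
    case False
    then have "k - d1 < d2" "Suc k - d1 = Suc (k - d1)" using k by auto
    then show ?thesis using assms(2,3) False unfolding graph_walk_def by (cases "k = d1") auto
  qed
qed

lemma graph_walk_in_tet:
  assumes "t \<in> T" "x \<in> t" "y \<in> t"
  shows "\<exists>d w. w 0 = x \<and> w d = y \<and> graph_walk T w d"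
proof (cases "x = y")
  case True then show ?thesis by (intro exI[of _ 0] exI[of _ "\<lambda>_. x"]) (auto simp: graph_walk_def)
next
  case False
  then have "(x, y) \<in> edges T \<or> (y, x) \<in> edges T" using assms unfolding edges_def by (cases "x < y") auto
  then show ?thesis by (intro exI[of _ 1] exI[of _ "\<lambda>k. if k = 0 then x else y"]) (auto simp: graph_walk_def)
qed

lemma graph_walk_exists:
  assumes T: "connected_on T share_face" and ti: "ti \<in> T" "i \<in> ti" and tj: "tj \<in> T" "j \<in> tj"
  shows "\<exists>d w. w 0 = i \<and> w d = j \<and> graph_walk T w d"
proof -
  have "(ti, tj) \<in> {(x, y). x \<in> T \<and> y \<in> T \<and> share_face x y}\<^sup>*"
    using T ti tj unfolding connected_on_def by auto
  then have "\<forall>x\<in>tj. \<exists>d w. w 0 = i \<and> w d = x \<and> graph_walk T w d"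
  proof (induction rule: rtrancl_induct)
    case base
    then show ?case using graph_walk_in_tet[OF ti] by blast
  next
    case (step t t')
    then have t': "t' \<in> T" and "card (t \<inter> t') = 3" unfolding share_face_def by auto
    then obtain y where y: "y \<in> t" "y \<in> t'" by (metis card.empty disjoint_iff zero_neq_numeral)
    obtain d1 w1 where w1: "w1 0 = i" "w1 d1 = y" "graph_walk T w1 d1" using step.IH y by blast
    show ?case
    proof
      fix x assume "x \<in> t'"
      then obtain d2 w2 where w2: "w2 0 = y" "w2 d2 = x" "graph_walk T w2 d2"
        using graph_walk_in_tet[OF t' y(2)] by blast
      show "\<exists>d w. w 0 = i \<and> w d = x \<and> graph_walk T w d"
        using graph_walk_append[OF w1(3) w2(3)] w1 w2
        by (intro exI[of _ "d1 + d2"] exI[of _ "\<lambda>k. if k \<le> d1 then w1 k else w2 (k - d1)"]) auto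
    qed
  qed
  then show ?thesis using tj by blast
qed

lemma graph_dist_walk:
  assumes "\<exists>d w. w 0 = i \<and> w d = j \<and> graph_walk T w d"
  obtains w where "w 0 = i" "w (graph_dist T i j) = j" "graph_walk T w (graph_dist T i j)"
proof -
  have "\<exists>w. w 0 = i \<and> w (graph_dist T i j) = j \<and> graph_walk T w (graph_dist T i j)"
    using assms unfolding graph_dist_def graph_walk_def by (rule LeastI_ex)
  then show ?thesis using that by blast
qed

lemma graph_dist_le_diameter:
  assumes "i < n" "j < n"
  shows "graph_dist T i j \<le> diameter n T"
proof -
  have "finite {graph_dist T i j | i j. i < n \<and> j < n}"
    by (rule finite_subset[of _ "(\<lambda>(i, j). graph_dist T i j) ` ({..<n} \<times> {..<n})"]) auto
  then show ?thesis unfolding diameter_def by (rule Max_ge) (use assms in blast)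
qed

lemma connected_on_walk:
  assumes "connected_on S R" "finite S" "a \<in> S" "b \<in> S"
  obtains k f where "k \<le> card S * card S" "f 0 = a" "f k = b"
    "\<forall>i<k. f i \<in> S \<and> f (Suc i) \<in> S \<and> R (f i) (f (Suc i))"
proof -
  define Rel where "Rel = {(x, y). x \<in> S \<and> y \<in> S \<and> R x y}"
  have sub: "Rel \<subseteq> S \<times> S" unfolding Rel_def by auto
  then have fin: "finite Rel" using assms(2) by (meson finite_SigmaI finite_subset)
  have card: "card Rel \<le> card S * card S" using card_mono[OF _ sub] assms(2) by (simp add: card_cartesian_product)
  have "(a, b) \<in> Rel\<^sup>*" using assms unfolding connected_on_def Rel_def by auto
  then obtain k where k: "k \<le> card Rel" "(a, b) \<in> Rel ^^ k" using rtrancl_finite_eq_relpow[OF fin] by auto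
  then obtain f where "f 0 = a" "f k = b" "\<forall>i<k. (f i, f (Suc i)) \<in> Rel" using relpow_fun_conv by metis
  then show ?thesis using that[of k f] k(1) card unfolding Rel_def by auto
qed

lemma tet_walk_append:
  assumes ts: "tet_walk T K ts" and f: "tet_walk T k f" "f 0 = ts K"
  shows "tet_walk T (K + k) (\<lambda>j. if j \<le> K then ts j else f (j - K))"
  unfolding tet_walk_def
proof (intro conjI allI impI)
  fix j assume "j \<le> K + k"
  then show "(if j \<le> K then ts j else f (j - K)) \<in> T"
    using ts f(1) unfolding tet_walk_def by auto
next
  fix j assume j: "j < K + k"
  show "share_face (if j \<le> K then ts j else f (j - K)) (if Suc j \<le> K then ts (Suc j) else f (Suc j - K))"
  proof (cases "j < K")
    case True then show ?thesis using ts unfolding tet_walk_def by auto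
  next
    case False
    then have "j - K < k" "Suc j - K = Suc (j - K)" using j by auto
    then show ?thesis using f False unfolding tet_walk_def by (cases "j = K") auto
  qed
qed

lemma tet_walk_vertex_chain:
  assumes walk: "tet_walk T K ts" and "a \<in> ts 0" "v \<in> ts K"
  obtains y where "y 0 = a" "y (Suc K) = v" "\<forall>k\<le>K. y k \<in> ts k \<and> y (Suc k) \<in> ts k"
proof -
  have "ts k \<inter> ts (Suc k) \<noteq> {}" if "k < K" for k
    using walk that unfolding tet_walk_def share_face_def by (metis card.empty zero_neq_numeral)
  then have "\<exists>x. x \<in> ts (k - 1) \<inter> ts k" if "0 < k" "k \<le> K" for k
    using that by (metis Suc_diff_1 Suc_le_lessD all_not_in_conv less_imp_diff_less)
  then have y: "(SOME x. x \<in> ts (k - 1) \<inter> ts k) \<in> ts (k - 1) \<inter> ts k" if "0 < k" "k \<le> K" for k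
    using that by (meson someI_ex)
  define y where "y k = (if k = 0 then a else if k \<le> K then (SOME x. x \<in> ts (k - 1) \<inter> ts k) else v)" for k
  have "y k \<in> ts k \<and> y (Suc k) \<in> ts k" if "k \<le> K" for k
    using y[of k] y[of "Suc k"] that assms(2,3) unfolding y_def by (cases "k = K") auto
  then show ?thesis using that[of y] unfolding y_def by auto
qed

lemma tet_dist_le:
  assumes "tet_walk T d ts" "x \<subseteq> ts 0" "y \<subseteq> ts d"
  shows "tet_dist T x y \<le> d"
  unfolding tet_dist_def by (rule Least_le) (use assms in \<open>auto simp: tet_walk_def\<close>)

lemma tet_dist_le_1_of_adjacent:
  assumes t: "t \<in> T" "t' \<in> T" "t' = t \<or> share_face t' t" and "x \<in> t'" "s \<subseteq> t"
  shows "tet_dist T {x} s \<le> 1"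
proof (cases "t' = t")
  case True
  have "tet_dist T {x} s \<le> 0"
    by (rule tet_dist_le[of _ _ "\<lambda>_. t"]) (use assms True in \<open>auto simp: tet_walk_def\<close>)
  then show ?thesis by simp
next
  case False
  show ?thesis
    by (rule tet_dist_le[of _ _ "\<lambda>k. if k = 0 then t' else t"]) (use assms False in \<open>auto simp: tet_walk_def\<close>)
qed

lemma norm_diff_le_of_steps:
  fixes f :: "nat \<Rightarrow> 'a::real_normed_vector"
  assumes "\<And>k. k < K \<Longrightarrow> norm (f k - f (Suc k)) \<le> d" "k \<le> K"
  shows "norm (f 0 - f k) \<le> real k * d"
  using assms(2)
proof (induction k)
  case (Suc k)
  have "norm (f 0 - f (Suc k)) \<le> norm (f 0 - f k) + norm (f k - f (Suc k))"
    using norm_triangle_ineq[of "f 0 - f k" "f k - f (Suc k)"] by simp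
  also have "\<dots> \<le> real k * d + d" using Suc assms(1) by (intro add_mono) auto
  finally show ?case by (simp add: algebra_simps)
qed simp

definition face_cross_bound :: "real \<Rightarrow> real \<Rightarrow> real" where
  "face_cross_bound A lmin = lmin * (lmin / A)"

definition star_bound :: "real \<Rightarrow> real \<Rightarrow> real \<Rightarrow> nat" where
  "star_bound A lmin lmax = (nat (2 * \<lceil>lmax / ((lmin / A / 4) / 4)\<rceil> + 1))^3"

definition rotation_step_const :: "real \<Rightarrow> real \<Rightarrow> real \<Rightarrow> real" where
  "rotation_step_const A lmin lmax = 6 * lmax / face_cross_bound A lmin"

definition walk_const :: "real \<Rightarrow> real \<Rightarrow> real \<Rightarrow> real" where
  "walk_const A lmin lmax =
     (real (star_bound A lmin lmax ^ 2) + 1)\<^sup>2 * (1 + \<bar>rotation_step_const A lmin lmax\<bar> * \<bar>lmax\<bar>)"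

definition centering_const :: "real \<Rightarrow> real \<Rightarrow> real \<Rightarrow> real" where
  "centering_const A lmin lmax = 1 / (2 * (walk_const A lmin lmax)\<^sup>2)"

definition walk_factor :: "real \<Rightarrow> real \<Rightarrow> real \<Rightarrow> nat \<Rightarrow> nat set set \<Rightarrow> real" where
  "walk_factor A lmin lmax n T =
     (let m = real (star_bound A lmin lmax ^ 2 * diameter n T)
      in (m + 1) * (1 + m * rotation_step_const A lmin lmax * lmax))"

lemma walk_const_ge_1: "1 \<le> walk_const A lmin lmax"
proof -
  have "1 \<le> (real (star_bound A lmin lmax ^ 2) + 1)\<^sup>2" by (rule one_le_power) simp
  moreover have "1 \<le> 1 + \<bar>rotation_step_const A lmin lmax\<bar> * \<bar>lmax\<bar>" by simp
  ultimately show ?thesis unfolding walk_const_def using mult_mono[of 1 _ 1] by fastforce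
qed

lemma centering_const_pos: "0 < centering_const A lmin lmax"
  using walk_const_ge_1[of A lmin lmax] unfolding centering_const_def by simp

section \<open>Edge-simple trusses\<close>

locale edge_simple_truss =
  fixes A lmin lmax gmin gmax :: real and n :: nat and p :: pos
    and T :: "nat set set" and \<gamma> :: "nat set \<Rightarrow> real"
  assumes lmin_pos: "0 < lmin"
    and inj: "inj_on p {..<n}"
    and edge_simple: "edge_simple A lmin lmax gmin gmax n p T \<gamma>"
begin

lemma simplicial: "simplicial_complex n p T"
  using edge_simple unfolding edge_simple_def by simp

lemma tet_subset: "t \<in> T \<Longrightarrow> t \<subseteq> {..<n}"
  and card_tet: "t \<in> T \<Longrightarrow> card t = 4"
  and tet_independent: "t \<in> T \<Longrightarrow> \<not> affine_dependent (p ` t)"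
  using simplicial unfolding simplicial_complex_def by auto

lemma finite_tet: "t \<in> T \<Longrightarrow> finite t"
  using card_tet by (metis card.infinite zero_neq_numeral)

lemma finite_T: "finite T"
  by (rule finite_subset[of _ "Pow {..<n}"]) (use tet_subset in auto)

lemma edge_length:
  assumes "t \<in> T" "x \<in> t" "y \<in> t" "x \<noteq> y"
  shows "lmin \<le> dist (p x) (p y)" and "dist (p x) (p y) \<le> lmax"
proof -
  have "(min x y, max x y) \<in> edges T" unfolding edges_def using assms by (auto simp: min_def max_def)
  then have "lmin \<le> dist (p (min x y)) (p (max x y)) \<and> dist (p (min x y)) (p (max x y)) \<le> lmax"
    using edge_simple unfolding edge_simple_def by fast
  then have "lmin \<le> dist (p x) (p y) \<and> dist (p x) (p y) \<le> lmax"
    by (cases "x \<le> y") (auto simp: min_def max_def dist_commute)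
  then show "lmin \<le> dist (p x) (p y)" and "dist (p x) (p y) \<le> lmax" by auto
qed

lemma lmax_nonneg: "t \<in> T \<Longrightarrow> 0 \<le> lmax"
proof -
  assume t: "t \<in> T"
  then obtain x y where "x \<in> t" "y \<in> t" "x \<noteq> y"
    using card_tet[OF t] unfolding card_eq_4_iff_distinct by blast
  then show "0 \<le> lmax" using edge_length[OF t, of x y] lmin_pos by linarith
qed

lemma tet_shape:
  assumes t: "t \<in> T"
  obtains a b c d where "t = {a, b, c, d}" "a \<noteq> b" "a \<noteq> c" "a \<noteq> d" "b \<noteq> c" "b \<noteq> d" "c \<noteq> d"
    and "tet_det (p a) (p b) (p c) (p d) \<noteq> 0" "0 < A"
    and "lmin / A * tet_face_sum (p a) (p b) (p c) (p d) \<le> \<bar>tet_det (p a) (p b) (p c) (p d)\<bar>"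
proof -
  obtain a0 b0 c0 d0 where "t = {a0, b0, c0, d0}"
    using card_tet[OF t] unfolding card_eq_4_iff_distinct by blast
  then have ex: "\<exists>r a b c d. t = {a, b, c, d} \<and> r = aspect_ratio (p a) (p b) (p c) (p d)" by blast
  obtain a b c d where abcd: "t = {a, b, c, d}"
    and ar: "tet_aspect_ratio p t = aspect_ratio (p a) (p b) (p c) (p d)"
    using someI_ex[OF ex] unfolding tet_aspect_ratio_def by blast
  have "card {a, b, c, d} = 4" using card_tet[OF t] unfolding abcd .
  note distinct = card_4_imp_distinct[OF this]
  have "inj_on p t" using inj tet_subset[OF t] by (rule inj_on_subset)
  then have "p a \<noteq> p b" "p a \<noteq> p c" "p a \<noteq> p d" "p b \<noteq> p c" "p b \<noteq> p d" "p c \<noteq> p d"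
    using distinct unfolding abcd inj_on_def by blast+
  then have D: "tet_det (p a) (p b) (p c) (p d) \<noteq> 0"
    using tet_det_nonzero tet_independent[OF t] unfolding abcd by simp
  have "tet_aspect_ratio p t \<le> A" using edge_simple t unfolding edge_simple_def by blast
  then have "aspect_ratio (p a) (p b) (p c) (p d) \<le> A" unfolding ar .
  moreover have "lmin \<le> dist (p a) (p b)" using edge_length[OF t] distinct abcd by simp
  ultimately show ?thesis
    using that[OF abcd distinct D] inradius_ge_of_aspect_ratio_le[OF _ lmin_pos _ D] by blast
qed

lemma A_pos: "t \<in> T \<Longrightarrow> 0 < A"
  by (rule tet_shape)

lemma face_cross_lower_bound:
  assumes t: "t \<in> T" and xyz: "x \<in> t" "y \<in> t" "z \<in> t" "x \<noteq> y" "x \<noteq> z" "y \<noteq> z"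
  shows "face_cross_bound A lmin \<le> norm (cross3 (p y - p x) (p z - p x))"
proof -
  obtain a b c d where abcd: "t = {a, b, c, d}"
    and distinct: "a \<noteq> b" "a \<noteq> c" "a \<noteq> d" "b \<noteq> c" "b \<noteq> d" "c \<noteq> d"
    and D: "tet_det (p a) (p b) (p c) (p d) \<noteq> 0" and A: "0 < A"
    and r: "lmin / A * tet_face_sum (p a) (p b) (p c) (p d) \<le> \<bar>tet_det (p a) (p b) (p c) (p d)\<bar>"
    by (rule tet_shape[OF t])
  have len: "lmin \<le> norm (p v - p u)" if "u \<in> t" "v \<in> t" "u \<noteq> v" for u v
    using edge_length(1)[OF t that] by (simp add: dist_norm norm_minus_commute)
  have mem: "a \<in> t" "b \<in> t" "c \<in> t" using abcd by auto
  have "0 < lmin / A" using A lmin_pos by simp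
  note faces = tet_face_lower_bounds[OF D this r lmin_pos len[OF mem(1,2) distinct(1)]
      len[OF mem(1,3) distinct(2)] len[OF mem(2,3) distinct(4)]]
  have inj_t: "inj_on p t" using inj tet_subset[OF t] by (rule inj_on_subset)
  have F: "face_cross_ge (face_cross_bound A lmin) (p a) (p b) (p c)" "face_cross_ge (face_cross_bound A lmin) (p a) (p b) (p d)"
    "face_cross_ge (face_cross_bound A lmin) (p a) (p c) (p d)" "face_cross_ge (face_cross_bound A lmin) (p b) (p c) (p d)"
    using faces unfolding face_cross_ge_def face_cross_bound_def by simp_all
  have "p x \<in> {p a, p b, p c, p d}" "p y \<in> {p a, p b, p c, p d}" "p z \<in> {p a, p b, p c, p d}"
    using xyz(1-3) unfolding abcd by auto
  moreover have "p x \<noteq> p y" "p x \<noteq> p z" "p y \<noteq> p z"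
    using inj_on_contraD[OF inj_t] xyz by simp_all
  ultimately have "face_cross_ge (face_cross_bound A lmin) (p x) (p y) (p z)"
    by (rule face_cross_ge_tetrahedron[OF F])
  then show ?thesis unfolding face_cross_ge_def .
qed

lemma face_cross_bound_pos: "t \<in> T \<Longrightarrow> 0 < face_cross_bound A lmin"
  unfolding face_cross_bound_def using A_pos lmin_pos by simp

lemma ball_centroid_subset_tet:
  assumes t: "t \<in> T"
  shows "ball (centroid p t) (lmin / A / 4) \<subseteq> convex hull (p ` t)"
proof -
  obtain a b c d where abcd: "t = {a, b, c, d}"
    and distinct: "a \<noteq> b" "a \<noteq> c" "a \<noteq> d" "b \<noteq> c" "b \<noteq> d" "c \<noteq> d"
    and D: "tet_det (p a) (p b) (p c) (p d) \<noteq> 0" and "0 < A"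
    and r: "lmin / A * tet_face_sum (p a) (p b) (p c) (p d) \<le> \<bar>tet_det (p a) (p b) (p c) (p d)\<bar>"
    by (rule tet_shape[OF t])
  have "(\<Sum>x\<in>t. p x) = p a + p b + p c + p d"
    unfolding abcd using distinct by (simp add: add.assoc)
  then have "centroid p t = (1/4) *\<^sub>R (p a + p b + p c + p d)" unfolding centroid_def by simp
  moreover have "ball ((1/4) *\<^sub>R (p a + p b + p c + p d)) (lmin / A / 4) \<subseteq> convex hull {p a, p b, p c, p d}"
    by (rule ball_centroid_subset_convex_hull[OF D]) (use r in simp)
  ultimately show ?thesis unfolding abcd by simp
qed

lemma interior_hull_inter_empty:
  assumes "t1 \<in> T" "t2 \<in> T" "t1 \<noteq> t2"
  shows "interior (convex hull (p ` t1) \<inter> convex hull (p ` t2)) = {}"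
proof -
  have "card (t1 \<inter> t2) < card t1"
    using assms finite_tet card_tet by (metis Int_lower1 Int_lower2 card_subset_eq psubsetI psubset_card_mono)
  then have "card (p ` (t1 \<inter> t2)) \<le> DIM(real^3)"
    using card_image_le[of "t1 \<inter> t2" p] finite_tet[OF assms(1)] card_tet[OF assms(1)] by simp
  then have "interior (convex hull (p ` (t1 \<inter> t2))) = {}"
    by (intro empty_interior_convex_hull) (use finite_tet[OF assms(1)] in auto)
  then show ?thesis using simplicial assms unfolding simplicial_complex_def by auto
qed

lemma dist_centroid_le:
  assumes t: "t \<in> T" "v \<in> t"
  shows "dist (p v) (centroid p t) \<le> lmax"
proof -
  have "norm (p x - p v) \<le> lmax" if "x \<in> t" for x
    using edge_length(2)[OF t(1) that t(2)] lmax_nonneg[OF t(1)] by (cases "x = v") (auto simp: dist_norm)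
  then have "norm (\<Sum>x\<in>t. p x - p v) \<le> 4 * lmax"
    using norm_sum[of "\<lambda>x. p x - p v" t] sum_mono[of t "\<lambda>x. norm (p x - p v)" "\<lambda>_. lmax"] card_tet[OF t(1)]
    by simp
  moreover have "centroid p t - p v = (1/4) *\<^sub>R (\<Sum>x\<in>t. p x - p v)"
    unfolding centroid_def using card_tet[OF t(1)] by (simp add: sum_subtractf scaleR_diff_right)
  moreover have "dist (p v) (centroid p t) = norm (centroid p t - p v)"
    by (simp add: dist_norm norm_minus_commute)
  ultimately show ?thesis by simp
qed

text \<open>The tetrahedra around a vertex have centroids within distance \<open>lmax\<close> of it, and
  their inscribed balls of radius \<open>lmin / A / 4\<close> cannot overlap.\<close>
lemma card_star_le: "card {t\<in>T. v \<in> t} \<le> star_bound A lmin lmax"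
proof (cases "{t\<in>T. v \<in> t} = {}")
  case False
  then obtain t0 where "t0 \<in> T" by auto
  define \<rho> where "\<rho> = lmin / A / 4"
  have \<rho>: "0 < \<rho>" using A_pos[OF \<open>t0 \<in> T\<close>] lmin_pos unfolding \<rho>_def by simp
  let ?S = "{t\<in>T. v \<in> t}"
  have sep: "\<rho> \<le> dist (centroid p t1) (centroid p t2)" if "t1 \<in> ?S" "t2 \<in> ?S" "t1 \<noteq> t2" for t1 t2
  proof -
    have t: "t1 \<in> T" "t2 \<in> T" using that by auto
    show ?thesis unfolding \<rho>_def
      by (rule dist_ge_of_balls_in_thin_intersection[OF ball_centroid_subset_tet[OF t(1)]
            ball_centroid_subset_tet[OF t(2)] interior_hull_inter_empty[OF t \<open>t1 \<noteq> t2\<close>]])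
  qed
  have "inj_on (centroid p) ?S"
  proof (rule inj_onI, rule ccontr)
    fix t1 t2 assume "t1 \<in> ?S" "t2 \<in> ?S" "centroid p t1 = centroid p t2" "t1 \<noteq> t2"
    then show False using sep[of t1 t2] \<rho> by simp
  qed
  then have "card ?S = card (centroid p ` ?S)" by (simp add: card_image)
  also have "\<dots> \<le> (nat (2 * \<lceil>lmax / (\<rho>/4)\<rceil> + 1))^3"
    by (rule card_separated_points_le[of _ "p v" lmax \<rho>]) (use dist_centroid_le sep \<rho> in auto)
  finally show ?thesis unfolding star_bound_def \<rho>_def .
qed (simp only: card.empty zero_le)

lemma rotation_small_on_tet:
  assumes t: "t \<in> T" "y1 \<in> t" and small: "\<And>y. y \<in> t \<Longrightarrow> norm (cross3 \<eta> (p y - p y1)) \<le> \<delta>"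
  shows "norm \<eta> \<le> 3 * \<delta> * lmax / face_cross_bound A lmin"
proof -
  have "card (t - {y1}) = 3" using card_tet[OF t(1)] finite_tet[OF t(1)] t(2) by simp
  then obtain y2 y3 where y: "y2 \<in> t" "y3 \<in> t" "y2 \<noteq> y1" "y3 \<noteq> y1" "y2 \<noteq> y3"
    unfolding card_3_iff by blast
  have len: "norm (p y - p y1) \<le> lmax" if "y \<in> t" "y \<noteq> y1" for y
    using edge_length(2)[OF t(1) that(1) t(2) that(2)] by (simp add: dist_norm)
  show ?thesis
    by (rule norm_le_of_cross3_le[OF small[OF y(1)] small[OF y(2)] len[OF y(1,3)] len[OF y(2,4)]
          face_cross_bound_pos[OF t(1)] face_cross_lower_bound[OF t y(1,2)]]) (use y in auto)
qed

lemma rotation_diff_le: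
  assumes t: "t \<in> T" "y1 \<in> t"
    and w: "\<And>y. y \<in> t \<Longrightarrow> norm ((q y + rotation_field p c w y) - (q y1 + rotation_field p c w y1)) \<le> \<epsilon>"
    and w': "\<And>y. y \<in> t \<Longrightarrow> norm ((q y + rotation_field p c w' y) - (q y1 + rotation_field p c w' y1)) \<le> \<epsilon>"
  shows "norm (w - w') \<le> rotation_step_const A lmin lmax * \<epsilon>"
proof -
  have "norm (cross3 (w - w') (p y - p y1)) \<le> 2 * \<epsilon>" if "y \<in> t" for y
  proof -
    have "cross3 (w - w') (p y - p y1) = ((q y + rotation_field p c w y) - (q y1 + rotation_field p c w y1))
        - ((q y + rotation_field p c w' y) - (q y1 + rotation_field p c w' y1))"
      unfolding rotation_field_def by (simp add: cross3_simps forall_3)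
    then show ?thesis using norm_triangle_ineq4 w[OF that] w'[OF that] by (smt (verit))
  qed
  then have "norm (w - w') \<le> 3 * (2 * \<epsilon>) * lmax / face_cross_bound A lmin" by (rule rotation_small_on_tet[OF t])
  then show ?thesis unfolding rotation_step_const_def by (simp add: field_simps)
qed

lemma face_rotations_exist:
  obtains a1 a2 a3 :: "nat set \<Rightarrow> nat" and \<omega> :: "nat set \<Rightarrow> real^3"
  where "\<And>t. t \<in> T \<Longrightarrow> a1 t \<in> t \<and> a2 t \<in> t \<and> a3 t \<in> t \<and> oriented_triangle T (a1 t, a2 t, a3 t)"
    and "\<And>t. t \<in> T \<Longrightarrow> centering p c q (a1 t, a2 t, a3 t) = (\<lambda>i. q i + rotation_field p c (\<omega> t) i)"
proof -
  define P where "P t s \<longleftrightarrow> (case s of (x, y, z, w) \<Rightarrow> x \<in> t \<and> y \<in> t \<and> z \<in> t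
      \<and> oriented_triangle T (x, y, z) \<and> centering p c q (x, y, z) = (\<lambda>i. q i + rotation_field p c w i))"
    for t and s :: "nat \<times> nat \<times> nat \<times> (real^3)"
  have "\<exists>s. P t s" if t: "t \<in> T" for t
  proof -
    obtain x y z d where "t = {x, y, z, d}" "x \<noteq> y" "x \<noteq> z" "y \<noteq> z"
      using card_tet[OF t] unfolding card_eq_4_iff_distinct by blast
    then have xyz: "x \<in> t" "y \<in> t" "z \<in> t" "x \<noteq> y" "x \<noteq> z" "y \<noteq> z" by auto
    then have "oriented_triangle T (x, y, z)" using t unfolding oriented_triangle_def by auto
    moreover have "cross3 (p y - p x) (p z - p x) \<noteq> 0"
      using face_cross_lower_bound[OF t xyz] face_cross_bound_pos[OF t] by auto
    then obtain w where "centering p c q (x, y, z) = (\<lambda>i. q i + rotation_field p c w i)"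
      using centering_eq_rotation by blast
    ultimately have "P t (x, y, z, w)" using xyz unfolding P_def by simp
    then show ?thesis ..
  qed
  then have "\<forall>t\<in>T. \<exists>s. P t s" by blast
  then obtain f where "\<forall>t\<in>T. P t (f t)" by (rule bchoice[elim_format]) blast
  then show ?thesis
    using that[of "\<lambda>t. fst (f t)" "\<lambda>t. fst (snd (f t))" "\<lambda>t. fst (snd (snd (f t)))" "\<lambda>t. snd (snd (snd (f t)))"]
    unfolding P_def prod.case_eq_if by blast
qed

text \<open>The step from \<open>y k\<close> to \<open>y (Suc k)\<close> lies in \<open>ts k\<close>, where the rotation of \<open>ts k\<close> is
  accurate up to \<open>\<epsilon>\<close>; using the rotation of \<open>ts 0\<close> instead costs the drift, at most \<open>K d\<close>,
  times the edge length.\<close>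
lemma displacement_along_tet_walk:
  fixes q :: bvec and c :: nat and \<omega> :: "nat set \<Rightarrow> real^3"
  defines "Q t i \<equiv> q i + rotation_field p c (\<omega> t) i"
  assumes walk: "tet_walk T K ts" and y: "\<forall>k\<le>K. y k \<in> ts k \<and> y (Suc k) \<in> ts k"
    and local: "\<And>t i j. t \<in> T \<Longrightarrow> i \<in> t \<Longrightarrow> j \<in> t \<Longrightarrow> norm (Q t i - Q t j) \<le> \<epsilon>"
    and step: "\<And>k. k < K \<Longrightarrow> norm (\<omega> (ts k) - \<omega> (ts (Suc k))) \<le> d" and "0 \<le> d"
  shows "norm (Q (ts 0) (y (Suc K)) - Q (ts 0) (y 0)) \<le> (K + 1) * (\<epsilon> + K * d * lmax)"
proof -
  have ts: "ts k \<in> T" if "k \<le> K" for k using walk that unfolding tet_walk_def by auto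
  have "lmax \<ge> 0" using lmax_nonneg[OF ts[of 0]] by simp
  have each: "norm (Q (ts 0) (y (Suc k)) - Q (ts 0) (y k)) \<le> \<epsilon> + K * d * lmax" if k: "k \<le> K" for k
  proof -
    have "Q (ts 0) (y (Suc k)) - Q (ts 0) (y k) = (Q (ts k) (y (Suc k)) - Q (ts k) (y k))
        + cross3 (\<omega> (ts 0) - \<omega> (ts k)) (p (y (Suc k)) - p (y k))"
      unfolding Q_def rotation_field_def by (simp add: cross3_simps forall_3)
    moreover have "norm (p (y (Suc k)) - p (y k)) \<le> lmax"
      using edge_length(2)[OF ts[OF k], of "y (Suc k)" "y k"] y k \<open>lmax \<ge> 0\<close>
      by (cases "y (Suc k) = y k") (auto simp: dist_norm)
    moreover have "norm (\<omega> (ts 0) - \<omega> (ts k)) \<le> K * d"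
      using norm_diff_le_of_steps[of K "\<lambda>k. \<omega> (ts k)" d k] step k \<open>0 \<le> d\<close>
      by (meson mult_right_mono of_nat_le_iff order_trans)
    ultimately have "norm (Q (ts 0) (y (Suc k)) - Q (ts 0) (y k))
        \<le> norm (Q (ts k) (y (Suc k)) - Q (ts k) (y k)) + K * d * lmax"
      using norm_triangle_ineq norm_cross3_le \<open>0 \<le> d\<close>
      by (smt (verit, best) mult_mono norm_ge_zero of_nat_0_le_iff zero_le_mult_iff)
    then show ?thesis using local[OF ts[OF k]] y k by fastforce
  qed
  have "Q (ts 0) (y (Suc K)) - Q (ts 0) (y 0) = (\<Sum>k<Suc K. Q (ts 0) (y (Suc k)) - Q (ts 0) (y k))"
    by (rule sum_lessThan_telescope[symmetric])
  then have "norm (Q (ts 0) (y (Suc K)) - Q (ts 0) (y 0)) \<le> (\<Sum>k<Suc K. \<epsilon> + K * d * lmax)"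
    using norm_sum order_trans sum_mono each by (smt (verit) lessThan_iff less_Suc_eq_le)
  then show ?thesis by (simp add: add.commute)
qed

end

section \<open>Stiffly connected trusses\<close>

locale stiff_truss = edge_simple_truss +
  assumes stiffly_connected: "stiffly_connected n T"
    and covered: "\<forall>v<n. \<exists>t\<in>T. v \<in> t"
begin

text \<open>Each edge of a graph walk is crossed by turning around its first endpoint inside the
  vertex star, which is connected and has at most \<open>star_bound\<close> tetrahedra.\<close>
lemma tet_walk_of_graph_walk:
  assumes w: "graph_walk T w D" and t0: "t0 \<in> T" "w 0 \<in> t0"
  shows "\<exists>K ts. K \<le> star_bound A lmin lmax ^ 2 * D \<and> ts 0 = t0 \<and> tet_walk T K ts \<and> w D \<in> ts K"
  using w
proof (induction D)
  case 0
  then show ?case using t0 by (intro exI[of _ 0] exI[of _ "\<lambda>_. t0"]) (auto simp: tet_walk_def)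
next
  case (Suc D)
  let ?M = "star_bound A lmin lmax"
  have "graph_walk T w D" using Suc.prems unfolding graph_walk_def by auto
  then obtain K ts where IH: "K \<le> ?M ^ 2 * D" "ts 0 = t0" "tet_walk T K ts" "w D \<in> ts K"
    using Suc.IH by blast
  have "(w D, w (Suc D)) \<in> edges T \<or> (w (Suc D), w D) \<in> edges T"
    using Suc.prems unfolding graph_walk_def by auto
  then obtain \<tau> where \<tau>: "\<tau> \<in> T" "w D \<in> \<tau>" "w (Suc D) \<in> \<tau>" unfolding edges_def by auto
  let ?S = "{t\<in>T. w D \<in> t}"
  have "w D < n" using \<tau> tet_subset by auto
  then have "connected_on ?S share_face" using stiffly_connected unfolding stiffly_connected_def by auto
  moreover have "ts K \<in> ?S" using IH(3,4) unfolding tet_walk_def by auto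
  ultimately obtain k f where f: "k \<le> card ?S * card ?S" "f 0 = ts K" "f k = \<tau>"
      "\<forall>i<k. f i \<in> ?S \<and> f (Suc i) \<in> ?S \<and> share_face (f i) (f (Suc i))"
    using connected_on_walk[of ?S share_face "ts K" \<tau>] finite_T \<tau> by auto
  have "card ?S * card ?S \<le> ?M ^ 2" using card_star_le[of "w D"] by (simp add: power2_eq_square mult_le_mono)
  have "tet_walk T k f" using f(3,4) \<tau>(1) unfolding tet_walk_def by (metis (no_types, lifting) le_neq_implies_less mem_Collect_eq)
  define ts' where "ts' j = (if j \<le> K then ts j else f (j - K))" for j
  have "tet_walk T (K + k) ts'" unfolding ts'_def by (rule tet_walk_append[OF IH(3) \<open>tet_walk T k f\<close> f(2)])
  moreover have "ts' 0 = t0" "w (Suc D) \<in> ts' (K + k)"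
    using IH(2,4) f(2,3) \<tau>(3) unfolding ts'_def by (cases "k = 0"; auto)+
  moreover have "K + k \<le> ?M ^ 2 * Suc D" using IH(1) f(1) \<open>card ?S * card ?S \<le> ?M ^ 2\<close> by simp
  ultimately show ?case by blast
qed

lemma displacement_le_diameter:
  fixes q :: bvec and c :: nat and \<omega> :: "nat set \<Rightarrow> real^3"
  defines "Q t i \<equiv> q i + rotation_field p c (\<omega> t) i"
    and "m \<equiv> real (star_bound A lmin lmax ^ 2 * diameter n T)"
  assumes local: "\<And>t i j. t \<in> T \<Longrightarrow> i \<in> t \<Longrightarrow> j \<in> t \<Longrightarrow> norm (Q t i - Q t j) \<le> \<epsilon>"
    and step: "\<And>t t'. t \<in> T \<Longrightarrow> t' \<in> T \<Longrightarrow> share_face t t' \<Longrightarrow> norm (\<omega> t - \<omega> t') \<le> d"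
    and "0 \<le> d" and t0: "t0 \<in> T" "a \<in> t0" and v: "v < n"
  shows "norm (Q t0 v - Q t0 a) \<le> (m + 1) * (\<epsilon> + m * d * lmax)"
proof -
  obtain tv where tv: "tv \<in> T" "v \<in> tv" using covered v by blast
  have "connected_on T share_face" using stiffly_connected unfolding stiffly_connected_def by simp
  then have "\<exists>d w. w 0 = a \<and> w d = v \<and> graph_walk T w d" using graph_walk_exists t0 tv by blast
  then obtain w where w: "w 0 = a" "w (graph_dist T a v) = v" "graph_walk T w (graph_dist T a v)"
    by (rule graph_dist_walk)
  obtain K ts where K: "K \<le> star_bound A lmin lmax ^ 2 * graph_dist T a v"
    and ts: "ts 0 = t0" "tet_walk T K ts" "v \<in> ts K"
    using tet_walk_of_graph_walk[OF w(3) t0(1), unfolded w(1) w(2), OF t0(2)] by blast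
  obtain y where y: "y 0 = a" "y (Suc K) = v" "\<forall>k\<le>K. y k \<in> ts k \<and> y (Suc k) \<in> ts k"
    using tet_walk_vertex_chain[OF ts(2)] ts(1,3) t0(2) by blast
  have "\<And>k. k < K \<Longrightarrow> norm (\<omega> (ts k) - \<omega> (ts (Suc k))) \<le> d"
    using ts(2) step unfolding tet_walk_def by simp
  then have "norm (Q t0 v - Q t0 a) \<le> (K + 1) * (\<epsilon> + K * d * lmax)"
    using displacement_along_tet_walk[OF ts(2) y(3), of q c \<omega> \<epsilon> d] local \<open>0 \<le> d\<close> ts(1) y(1,2)
    unfolding Q_def by (simp add: add.commute)
  also have "\<dots> \<le> (m + 1) * (\<epsilon> + m * d * lmax)"
  proof -
    have "a < n" using t0 tet_subset by auto
    then have "K \<le> star_bound A lmin lmax ^ 2 * diameter n T"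
      using K graph_dist_le_diameter[OF _ v] by (meson le_trans mult_le_mono2)
    then have "real K \<le> m" unfolding m_def by linarith
    moreover have "0 \<le> \<epsilon>" using local[OF t0(1) t0(2) t0(2)] by simp
    ultimately show ?thesis using \<open>0 \<le> d\<close> lmax_nonneg[OF t0(1)]
      by (intro mult_mono add_mono mult_right_mono) auto
  qed
  finally show ?thesis .
qed

lemma near_rigid_of_small_centered_differences:
  assumes small: "\<And>s1 s2 s3 i j. oriented_triangle T (s1, s2, s3) \<Longrightarrow> i < n \<Longrightarrow> j < n \<Longrightarrow>
      tet_dist T {i} {s1, s2, s3} \<le> 1 \<Longrightarrow> tet_dist T {j} {s1, s2, s3} \<le> 1 \<Longrightarrow>
      norm (centering p c q (s1, s2, s3) i - centering p c q (s1, s2, s3) j) \<le> \<epsilon>"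
    and "0 < n"
  shows "\<exists>w a. a < n \<and> (\<forall>v<n. norm ((q v + rotation_field p c w v) - (q a + rotation_field p c w a))
    \<le> walk_factor A lmin lmax n T * \<epsilon>)"
proof -
  define \<kappa> where "\<kappa> = rotation_step_const A lmin lmax"
  obtain a1 a2 a3 \<omega>
    where tri: "\<And>t. t \<in> T \<Longrightarrow> a1 t \<in> t \<and> a2 t \<in> t \<and> a3 t \<in> t \<and> oriented_triangle T (a1 t, a2 t, a3 t)"
    and \<omega>: "\<And>t. t \<in> T \<Longrightarrow> centering p c q (a1 t, a2 t, a3 t) = (\<lambda>i. q i + rotation_field p c (\<omega> t) i)"
    by (rule face_rotations_exist[where c = c and q = q]) blast
  define Q where "Q t i = q i + rotation_field p c (\<omega> t) i" for t i
  have near: "norm (Q t i - Q t j) \<le> \<epsilon>"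
    if t: "t \<in> T" "t' \<in> T" "t' = t \<or> share_face t' t" and ij: "i \<in> t'" "j \<in> t'" for t t' i j
  proof -
    have "{a1 t, a2 t, a3 t} \<subseteq> t" using tri[OF t(1)] by simp
    then have "tet_dist T {x} {a1 t, a2 t, a3 t} \<le> 1" if "x \<in> t'" for x
      using tet_dist_le_1_of_adjacent[OF t that] by simp
    moreover have "i < n" "j < n" using ij t(2) tet_subset by auto
    ultimately show ?thesis
      using small[of "a1 t" "a2 t" "a3 t" i j] tri[OF t(1)] ij unfolding \<omega>[OF t(1)] Q_def by simp
  qed
  have local: "norm (Q t i - Q t j) \<le> \<epsilon>" if "t \<in> T" "i \<in> t" "j \<in> t" for t i j
    using near[OF that(1) that(1)] that by simp
  have step: "norm (\<omega> t - \<omega> t') \<le> \<kappa> * \<epsilon>" if t: "t \<in> T" "t' \<in> T" "share_face t t'" for t t'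
  proof -
    have "share_face t' t" using t(3) unfolding share_face_def by (simp add: Int_commute)
    then have "norm (Q t y - Q t (a1 t')) \<le> \<epsilon>" "norm (Q t' y - Q t' (a1 t')) \<le> \<epsilon>" if "y \<in> t'" for y
      using near[OF t(1,2)] local[OF t(2)] that tri[OF t(2)] by auto
    then show ?thesis unfolding \<kappa>_def Q_def using tri[OF t(2)] by (intro rotation_diff_le[OF t(2)]) auto
  qed
  obtain t0 where t0: "t0 \<in> T" using covered \<open>0 < n\<close> by blast
  then obtain a where a: "a \<in> t0" using tri by blast
  have "0 \<le> \<epsilon>" using local[OF t0 a a] by simp
  have "0 \<le> \<kappa>" using lmax_nonneg[OF t0] face_cross_bound_pos[OF t0]
    unfolding \<kappa>_def rotation_step_const_def by simp
  have "norm (Q t0 v - Q t0 a) \<le> walk_factor A lmin lmax n T * \<epsilon>" if "v < n" for v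
    using displacement_le_diameter[of q c \<omega> \<epsilon> "\<kappa> * \<epsilon>", OF _ step _ t0 a that] local
      \<open>0 \<le> \<epsilon>\<close> \<open>0 \<le> \<kappa>\<close> unfolding Q_def walk_factor_def Let_def \<kappa>_def by (simp add: algebra_simps)
  moreover have "a < n" using a t0 tet_subset by auto
  ultimately show ?thesis unfolding Q_def by blast
qed

lemma walk_factor_le:
  assumes "t \<in> T" "diameter n T \<noteq> 0"
  shows "0 \<le> walk_factor A lmin lmax n T"
    and "walk_factor A lmin lmax n T \<le> walk_const A lmin lmax * real (diameter n T) ^ 2"
proof -
  define M \<Delta> \<kappa> where "M = real (star_bound A lmin lmax ^ 2)" and "\<Delta> = real (diameter n T)"
    and "\<kappa> = rotation_step_const A lmin lmax"
  have nonneg: "0 \<le> M" "1 \<le> \<Delta>" "0 \<le> \<kappa>" "0 \<le> lmax"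
    using assms lmax_nonneg[OF assms(1)] face_cross_bound_pos[OF assms(1)]
    unfolding M_def \<Delta>_def \<kappa>_def rotation_step_const_def by auto
  have wf: "walk_factor A lmin lmax n T = (M * \<Delta> + 1) * (1 + M * \<Delta> * \<kappa> * lmax)"
    unfolding walk_factor_def Let_def M_def \<Delta>_def \<kappa>_def by simp
  show "0 \<le> walk_factor A lmin lmax n T" unfolding wf using nonneg by simp
  have "M * \<Delta> + 1 \<le> (M + 1) * \<Delta>" using nonneg by (simp add: algebra_simps)
  moreover have "1 + M * \<Delta> * \<kappa> * lmax \<le> (M + 1) * \<Delta> * (1 + \<kappa> * lmax)"
    using nonneg by (simp add: algebra_simps mult_right_mono add_mono mult_nonneg_nonneg)
  ultimately have "walk_factor A lmin lmax n T \<le> ((M + 1) * \<Delta>) * ((M + 1) * \<Delta> * (1 + \<kappa> * lmax))"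
    unfolding wf using nonneg by (intro mult_mono) auto
  also have "\<dots> = walk_const A lmin lmax * \<Delta>\<^sup>2"
    using nonneg unfolding walk_const_def M_def \<kappa>_def by (simp add: power2_eq_square mult_ac)
  finally show "walk_factor A lmin lmax n T \<le> walk_const A lmin lmax * real (diameter n T) ^ 2"
    unfolding \<Delta>_def .
qed

text \<open>For diameter \<open>0\<close> the left-hand side vanishes, since division by \<open>0\<close> yields \<open>0\<close>.\<close>
lemma walk_factor_sq_le:
  assumes "t \<in> T"
  shows "(walk_factor A lmin lmax n T)\<^sup>2 * (centering_const A lmin lmax / (real (diameter n T) ^ 4 * real n))
    \<le> 1 / (2 * real n)"
proof (cases "diameter n T = 0")
  case False
  let ?W = "walk_const A lmin lmax" and ?\<Delta> = "real (diameter n T)"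
  have "(walk_factor A lmin lmax n T)\<^sup>2 \<le> (?W * ?\<Delta>\<^sup>2)\<^sup>2"
    using walk_factor_le[OF assms False] by (rule power_mono[rotated])
  also have "\<dots> = ?W\<^sup>2 * ?\<Delta> ^ 4" by (simp add: power_mult_distrib flip: power_mult)
  finally have "(walk_factor A lmin lmax n T)\<^sup>2 * (centering_const A lmin lmax / (?\<Delta> ^ 4 * real n))
      \<le> ?W\<^sup>2 * ?\<Delta> ^ 4 * (centering_const A lmin lmax / (?\<Delta> ^ 4 * real n))"
    using less_imp_le[OF centering_const_pos] by (intro mult_right_mono divide_nonneg_nonneg) auto
  also have "\<dots> = 1 / (2 * real n)"
    using False walk_const_ge_1[of A lmin lmax] unfolding centering_const_def by (simp add: field_simps)
  finally show ?thesis .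
qed simp

lemma exists_large_centered_difference:
  assumes "ci < n" "bip n q q = 1" "\<forall>v\<in>stiffness_null_space n p T \<gamma>. bip n q v = 0"
  shows "\<exists>s1 s2 s3 i j. oriented_triangle T (s1, s2, s3) \<and> i < n \<and> j < n \<and>
    tet_dist T {i} {s1, s2, s3} \<le> 1 \<and> tet_dist T {j} {s1, s2, s3} \<le> 1 \<and>
    (norm (centering p ci q (s1, s2, s3) i - centering p ci q (s1, s2, s3) j))\<^sup>2
      \<ge> centering_const A lmin lmax / (real (diameter n T) ^ 4 * real n)"
proof (rule ccontr)
  define \<delta> where "\<delta> = centering_const A lmin lmax / (real (diameter n T) ^ 4 * real n)"
  assume "\<not> ?thesis"
  then have "norm (centering p ci q (s1, s2, s3) i - centering p ci q (s1, s2, s3) j) \<le> sqrt \<delta>"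
    if "oriented_triangle T (s1, s2, s3)" "i < n" "j < n" "tet_dist T {i} {s1, s2, s3} \<le> 1"
      "tet_dist T {j} {s1, s2, s3} \<le> 1" for s1 s2 s3 i j
    using that unfolding \<delta>_def by (metis not_le real_le_rsqrt less_imp_le)
  then obtain w a where a: "a < n" and rigid: "\<forall>v<n. norm ((q v + rotation_field p ci w v) - (q a + rotation_field p ci w a))
      \<le> walk_factor A lmin lmax n T * sqrt \<delta>"
    using near_rigid_of_small_centered_differences[of ci q "sqrt \<delta>"] assms(1) by auto
  obtain v where "v < n" and far: "1 / real n \<le> (norm ((q v + rotation_field p ci w v) - (q a + rotation_field p ci w a)))\<^sup>2"
    using exists_far_vertex[OF _ assms(2,3) a] tet_subset by blast
  obtain t where "t \<in> T" using covered a by blast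
  let ?B = "walk_factor A lmin lmax n T"
  have "0 \<le> \<delta>" using centering_const_pos unfolding \<delta>_def by (simp add: less_imp_le)
  have "1 / real n \<le> (?B * sqrt \<delta>)\<^sup>2"
    using far rigid \<open>v < n\<close> by (meson norm_ge_zero power_mono order_trans)
  also have "\<dots> = ?B\<^sup>2 * \<delta>" using \<open>0 \<le> \<delta>\<close> by (simp add: power_mult_distrib)
  also have "\<dots> \<le> 1 / (2 * real n)"
    using walk_factor_sq_le[OF \<open>t \<in> T\<close>] unfolding \<delta>_def by simp
  finally have "1 / real n \<le> 1 / (2 * real n)" .
  then show False using assms(1) by (simp add: divide_le_eq)
qed

end

theorem lemma4p3:
  fixes A lmin lmax gmin gmax :: real
  assumes "0 < lmin" and "0 < gmin"
  shows "\<exists>C::nat. \<exists>c::real. c > 0 \<and>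
    (\<forall>n (p::pos) (T::nat set set) (\<gamma>::nat set \<Rightarrow> real) (q::bvec) (ci::nat).
       inj_on p {..<n} \<and> (\<forall>v<n. \<exists>t\<in>T. v \<in> t) \<and>
       edge_simple A lmin lmax gmin gmax n p T \<gamma> \<and> stiffly_connected n T \<and>
       ci < n \<and> q \<in> block_vectors n \<and> bip n q q = 1 \<and>
       (\<forall>v\<in>stiffness_null_space n p T \<gamma>. bip n q v = 0)
     \<longrightarrow> (\<exists>s1 s2 s3 i j. oriented_triangle T (s1, s2, s3) \<and> i < n \<and> j < n \<and>
            tet_dist T {i} {s1, s2, s3} \<le> C \<and> tet_dist T {j} {s1, s2, s3} \<le> C \<and>
            (norm (centering p ci q (s1, s2, s3) i - centering p ci q (s1, s2, s3) j))\<^sup>2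
              \<ge> c / (real (diameter n T) ^ 4 * real n)))"
proof (rule exI[of _ 1], rule exI[of _ "centering_const A lmin lmax"], intro conjI centering_const_pos allI impI)
  fix n p T \<gamma> q ci
  assume H: "inj_on p {..<n} \<and> (\<forall>v<n. \<exists>t\<in>T. v \<in> t) \<and>
       edge_simple A lmin lmax gmin gmax n p T \<gamma> \<and> stiffly_connected n T \<and>
       ci < n \<and> q \<in> block_vectors n \<and> bip n q q = 1 \<and>
       (\<forall>v\<in>stiffness_null_space n p T \<gamma>. bip n q v = 0)"
  then interpret stiff_truss A lmin lmax gmin gmax n p T \<gamma>
    using \<open>0 < lmin\<close> by unfold_locales auto
  show "\<exists>s1 s2 s3 i j. oriented_triangle T (s1, s2, s3) \<and> i < n \<and> j < n \<and>
      tet_dist T {i} {s1, s2, s3} \<le> 1 \<and> tet_dist T {j} {s1, s2, s3} \<le> 1 \<and>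
      (norm (centering p ci q (s1, s2, s3) i - centering p ci q (s1, s2, s3) j))\<^sup>2
        \<ge> centering_const A lmin lmax / (real (diameter n T) ^ 4 * real n)"
    using exists_large_centered_difference H by blast
qed

end
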